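(* Let $v\in\mathbb{Z}^d$ be primitive and $p$ an odd prime. Then $O_{v,p}\cap\mathcal{U}=\bigsqcup_{h\in M_0}O_{v,p,h}$.
   Context: Setup: $\mathbb{G}_1=\mathrm{SO}_d$, $\mathbb{G}_2=\mathrm{ASL}_{d-1}=\{\begin{pmatrix}g&*\\0&1\end{pmatrix}:g\in\mathrm{SL}_{d-1}\}$, $\mathbb{G}=\mathbb{G}_1\times\mathbb{G}_2$. Elements of $\mathbb{G}(\mathbb{R}\times\mathbb{Q}_p)$ are written $((g_{1,\infty},g_{1,p}),(g_{2,\infty},g_{2,p}))$; $\mathbb{G}(\mathbb{Z}[1/p])$ is embedded diagonally, and $\mathcal{Y}_p=\mathbb{G}(\mathbb{R}\times\mathbb{Q}_p)/\mathbb{G}(\mathbb{Z}[1/p])$; $\mathcal{U}=\mathbb{G}(\mathbb{R}\times\mathbb{Z}_p)\mathbb{G}(\mathbb{Z}[1/p])\subseteq\mathcal{Y}_p$. For primitive $v$: $\Lambda_v=v^\perp\cap\mathbb{Z}^d$; $H_v\le\mathrm{SO}_d$ the stabilizer of $v$; $g_v\in\mathrm{SL}_d(\mathbb{Z})$ a fixed matrix whose first $d-1$ columns form a positively oriented $\mathbb{Z}$-basis of $\Lambda_v$; $L_v=\{(h,g_v^{-1}hg_v):h\in H_v\}\le\mathbb{G}$; $k_v\in\mathrm{SO}_d(\mathbb{R})$ fixed with $k_vv=\|v\|e_d$; $a_v=\mathrm{diag}(\|v\|^{-1/(d-1)},\dots,\|v\|^{-1/(d-1)},\|v\|)$. $O_{v,p}=((k_v,e),(a_vk_vg_v,e))\cdot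 L_v(\mathbb{R}\times\mathbb{Q}_p)\,\mathbb{G}(\mathbb{Z}[1/p])$. $M$ is a finite set of representatives of $H_v(\mathbb{Q}_p)=\bigsqcup_{h\in M}H_v(\mathbb{Z}_p)hH_v(\mathbb{Z}[1/p])$, and $M_0=\{h\in M:h\in\mathrm{SO}_d(\mathbb{Z}_p)\mathrm{SO}_d(\mathbb{Z}[1/p])\}$ (the $h\in M$ lying in the set of $p$-adic $\mathbb{G}_1$-coordinates of elements of $\mathcal{U}$). $K=H_{e_d}(\mathbb{R})\cong\mathrm{SO}_{d-1}(\mathbb{R})$, $\Delta K\times L_v(\mathbb{Z}_p)=\{((k,h'),(k,g_v^{-1}h'g_v)):k\in K,h'\in H_v(\mathbb{Z}_p)\}$, and $O_{v,p,h}=(\Delta K\times L_v(\mathbb{Z}_p))\cdot((k_v,h),(a_vk_vg_v,g_v^{-1}hg_v))\mathbb{G}(\mathbb{Z}[1/p])$. *)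

theory Defs
  imports Complex_Main "Jordan_Normal_Form.Determinant"
begin

text \<open>A field 'k of characteristic 0 (containing Q via of_rat) together with an absolute value
  absv is Q_p if absv is a non-archimedean absolute value restricting to the p-adic absolute
  value on Q, 'k is complete for absv, and Q is dense in 'k.  This determines (k, absv) up to
  isometric isomorphism, so quantifying over all such pairs is the same as talking about Q_p.\<close>

definition is_Qp :: "nat \<Rightarrow> ('k::field_char_0 \<Rightarrow> real) \<Rightarrow> bool" where
  "is_Qp p absv \<longleftrightarrow>
     (\<forall>x. absv x \<ge> 0) \<and> (\<forall>x. absv x = 0 \<longleftrightarrow> x = 0) \<and>
     (\<forall>x y. absv (x * y) = absv x * absv y) \<and>
     (\<forall>x y. absv (x + y) \<le> max (absv x) (absv y)) \<and>
     absv (of_nat p) = 1 / real p \<and>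
     (\<forall>n::int. coprime n (int p) \<longrightarrow> absv (of_int n) = 1) \<and>
     (\<forall>X :: nat \<Rightarrow> 'k. (\<forall>e>0. \<exists>N. \<forall>m\<ge>N. \<forall>n\<ge>N. absv (X m - X n) < e) \<longrightarrow>
         (\<exists>L. \<forall>e>0. \<exists>N. \<forall>n\<ge>N. absv (X n - L) < e)) \<and>
     (\<forall>x e. e > 0 \<longrightarrow> (\<exists>q::rat. absv (x - of_rat q) < e))"

definition Zp :: "('k \<Rightarrow> real) \<Rightarrow> 'k set" where
  "Zp absv = {x. absv x \<le> 1}"

definition Zinvp :: "nat \<Rightarrow> rat set" where
  "Zinvp p = {q. \<exists>n::nat. q * of_nat p ^ n \<in> \<int>}"

definition entries_in :: "nat \<Rightarrow> 'a set \<Rightarrow> 'a mat \<Rightarrow> bool" where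
  "entries_in d R g \<longleftrightarrow> (\<forall>i<d. \<forall>j<d. g $$ (i,j) \<in> R)"

definition SO_pts :: "nat \<Rightarrow> 'a::comm_ring_1 set \<Rightarrow> 'a mat set" where
  "SO_pts d R = {g. g \<in> carrier_mat d d \<and> entries_in d R g \<and>
                    g * transpose_mat g = 1\<^sub>m d \<and> det g = 1}"

text \<open>ASL_{d-1}(R), realised as d x d matrices [[g, *],[0, 1]] with g in SL_{d-1}(R).\<close>
definition ASL_pts :: "nat \<Rightarrow> 'a::comm_ring_1 set \<Rightarrow> 'a mat set" where
  "ASL_pts d R = {g. g \<in> carrier_mat d d \<and> entries_in d R g \<and>
                     (\<forall>j<d. g $$ (d-1, j) = (if j = d-1 then 1 else 0)) \<and>
                     det (mat (d-1) (d-1) (\<lambda>(i,j). g $$ (i,j))) = 1}"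

definition H_pts :: "nat \<Rightarrow> int vec \<Rightarrow> 'a::comm_ring_1 set \<Rightarrow> 'a mat set" where
  "H_pts d v R = {h \<in> SO_pts d R. h *\<^sub>v map_vec of_int v = map_vec of_int v}"

text \<open>Points of G(R x Q_p) = ((g_{1,inf}, g_{1,p}), (g_{2,inf}, g_{2,p})).\<close>
type_synonym 'k pt = "(real mat \<times> 'k mat) \<times> (real mat \<times> 'k mat)"

fun ptmul :: "'k::field_char_0 pt \<Rightarrow> 'k pt \<Rightarrow> 'k pt" where
  "ptmul ((a,b),(c,e)) ((a',b'),(c',e')) = ((a * a', b * b'), (c * c', e * e'))"

fun diag_emb :: "rat mat \<times> rat mat \<Rightarrow> 'k::field_char_0 pt" where
  "diag_emb (g1, g2) = ((map_mat of_rat g1, map_mat of_rat g1), (map_mat of_rat g2, map_mat of_rat g2))"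

definition Gamma :: "nat \<Rightarrow> nat \<Rightarrow> (rat mat \<times> rat mat) set" where
  "Gamma p d = {(g1, g2). g1 \<in> SO_pts d (Zinvp p) \<and> g2 \<in> ASL_pts d (Zinvp p)}"

definition G_RQp :: "nat \<Rightarrow> 'k::field_char_0 pt set" where
  "G_RQp d = {((a,b),(c,e)). a \<in> SO_pts d UNIV \<and> b \<in> SO_pts d UNIV \<and>
                             c \<in> ASL_pts d UNIV \<and> e \<in> ASL_pts d UNIV}"

definition G_RZp :: "nat \<Rightarrow> ('k::field_char_0 \<Rightarrow> real) \<Rightarrow> 'k pt set" where
  "G_RZp d absv = {((a,b),(c,e)). a \<in> SO_pts d UNIV \<and> b \<in> SO_pts d (Zp absv) \<and>
                                  c \<in> ASL_pts d UNIV \<and> e \<in> ASL_pts d (Zp absv)}"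

text \<open>The point x G(Z[1/p]) of Y_p = G(R x Q_p)/G(Z[1/p]), represented by the coset.\<close>
definition coset :: "nat \<Rightarrow> nat \<Rightarrow> 'k::field_char_0 pt \<Rightarrow> 'k pt set" where
  "coset p d x = {ptmul x (diag_emb \<gamma>) | \<gamma>. \<gamma> \<in> Gamma p d}"

definition Y_p :: "nat \<Rightarrow> nat \<Rightarrow> 'k::field_char_0 itself \<Rightarrow> 'k pt set set" where
  "Y_p p d _ = coset p d ` G_RQp d"

text \<open>\<U> = G(R x Z_p) G(Z[1/p]).\<close>
definition U_set :: "nat \<Rightarrow> nat \<Rightarrow> ('k::field_char_0 \<Rightarrow> real) \<Rightarrow> 'k pt set set" where
  "U_set p d absv = coset p d ` G_RZp d absv"

definition primitive :: "nat \<Rightarrow> int vec \<Rightarrow> bool" where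
  "primitive d v \<longleftrightarrow> v \<in> carrier_vec d \<and>
     (\<forall>n::int. (\<forall>i<d. n dvd v $ i) \<longrightarrow> n = 1 \<or> n = -1)"

definition vnorm :: "nat \<Rightarrow> int vec \<Rightarrow> real" where
  "vnorm d v = sqrt (\<Sum>i<d. (real_of_int (v $ i))\<^sup>2)"

text \<open>g_v in SL_d(Z) whose first d-1 columns form a positively oriented Z-basis of
  Lambda_v = v^perp \<inter> Z^d (positive orientation: (b_1,...,b_{d-1}, v) is positively oriented).\<close>
definition is_gv :: "nat \<Rightarrow> int vec \<Rightarrow> int mat \<Rightarrow> bool" where
  "is_gv d v g \<longleftrightarrow> g \<in> carrier_mat d d \<and> det g = 1 \<and>
     (\<forall>j<d-1. col g j \<bullet> v = 0) \<and>
     (\<forall>w \<in> carrier_vec d. w \<bullet> v = 0 \<longrightarrow>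
         (\<exists>c :: nat \<Rightarrow> int. \<forall>i<d. w $ i = (\<Sum>j<d-1. c j * g $$ (i,j)))) \<and>
     det (mat d d (\<lambda>(i,j). if j < d-1 then g $$ (i,j) else v $ i)) > 0"

definition is_kv :: "nat \<Rightarrow> int vec \<Rightarrow> real mat \<Rightarrow> bool" where
  "is_kv d v k \<longleftrightarrow> k \<in> SO_pts d UNIV \<and>
     k *\<^sub>v map_vec real_of_int v = vnorm d v \<cdot>\<^sub>v unit_vec d (d-1)"

definition a_v :: "nat \<Rightarrow> int vec \<Rightarrow> real mat" where
  "a_v d v = mat d d (\<lambda>(i,j). if i = j then
       (if i = d-1 then vnorm d v else vnorm d v powr (- 1 / real (d-1))) else 0)"

text \<open>L_v(R x Q_p) = {((h_inf,h_p),(g_v^-1 h_inf g_v, g_v^-1 h_p g_v))}.\<close>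
definition L_RQp :: "nat \<Rightarrow> int vec \<Rightarrow> int mat \<Rightarrow> 'k::field_char_0 pt set" where
  "L_RQp d v g = {((h1,h2),(m1,m2)). h1 \<in> H_pts d v UNIV \<and> h2 \<in> H_pts d v UNIV \<and>
      m1 \<in> carrier_mat d d \<and> m2 \<in> carrier_mat d d \<and>
      map_mat of_int g * m1 = h1 * map_mat of_int g \<and>
      map_mat of_int g * m2 = h2 * map_mat of_int g}"

definition O_vp :: "nat \<Rightarrow> nat \<Rightarrow> int vec \<Rightarrow> int mat \<Rightarrow> real mat \<Rightarrow> 'k::field_char_0 itself
                      \<Rightarrow> 'k pt set set" where
  "O_vp p d v g k _ = {coset p d (ptmul ((k, 1\<^sub>m d), (a_v d v * k * map_mat of_int g, 1\<^sub>m d)) l)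
                        | l. l \<in> L_RQp d v g}"

definition K_grp :: "nat \<Rightarrow> real mat set" where
  "K_grp d = {k \<in> SO_pts d UNIV. k *\<^sub>v unit_vec d (d-1) = unit_vec d (d-1)}"

definition DK_L :: "nat \<Rightarrow> int vec \<Rightarrow> int mat \<Rightarrow> ('k::field_char_0 \<Rightarrow> real) \<Rightarrow> 'k pt set" where
  "DK_L d v g absv = {((k,h'),(k,m')) | k h' m'. k \<in> K_grp d \<and> h' \<in> H_pts d v (Zp absv) \<and>
       m' \<in> carrier_mat d d \<and> map_mat of_int g * m' = h' * map_mat of_int g}"

definition O_vph :: "nat \<Rightarrow> nat \<Rightarrow> int vec \<Rightarrow> int mat \<Rightarrow> real mat \<Rightarrow> ('k::field_char_0 \<Rightarrow> real)
                       \<Rightarrow> 'k mat \<Rightarrow> 'k pt set set" where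
  "O_vph p d v g k absv h = {coset p d (ptmul y ((k, h), (a_v d v * k * map_mat of_int g, m)))
       | y m. y \<in> DK_L d v g absv \<and> m \<in> carrier_mat d d \<and>
              map_mat of_int g * m = h * map_mat of_int g}"

definition dcoset :: "nat \<Rightarrow> nat \<Rightarrow> int vec \<Rightarrow> ('k::field_char_0 \<Rightarrow> real) \<Rightarrow> 'k mat \<Rightarrow> 'k mat set" where
  "dcoset p d v absv h = {a * h * map_mat of_rat b | a b.
       a \<in> H_pts d v (Zp absv) \<and> b \<in> H_pts d v (Zinvp p)}"

definition is_rep_set :: "nat \<Rightarrow> nat \<Rightarrow> int vec \<Rightarrow> ('k::field_char_0 \<Rightarrow> real) \<Rightarrow> 'k mat set \<Rightarrow> bool" where
  "is_rep_set p d v absv M \<longleftrightarrow> finite M \<and> M \<subseteq> H_pts d v UNIV \<and>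
     H_pts d v UNIV = (\<Union>h\<in>M. dcoset p d v absv h) \<and>
     disjoint_family_on (dcoset p d v absv) M"

definition M0 :: "nat \<Rightarrow> nat \<Rightarrow> ('k::field_char_0 \<Rightarrow> real) \<Rightarrow> 'k mat set \<Rightarrow> 'k mat set" where
  "M0 p d absv M = {h \<in> M. \<exists>a b. a \<in> SO_pts d (Zp absv) \<and> b \<in> SO_pts d (Zinvp p) \<and>
                                  h = a * map_mat of_rat b}"

end

theory Submission
  imports Defs
begin

text \<open>A point of \<open>O\<^sub>v\<^sub>,\<^sub>p\<close> is the coset of \<open>((k\<^sub>v h\<^sub>1, h\<^sub>2), (a\<^sub>v k\<^sub>v h\<^sub>1 g\<^sub>v, g\<^sub>v\<^sup>-\<^sup>1 h\<^sub>2 g\<^sub>v))\<close>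
  with \<open>h\<^sub>1 \<in> H\<^sub>v(\<real>)\<close>, \<open>h\<^sub>2 \<in> H\<^sub>v(\<rat>\<^sub>p)\<close>. Write \<open>h\<^sub>2 = a' h \<beta>\<close> along the double cosets. If the point
  lies in \<open>\<U>\<close>, then \<open>h\<^sub>2 \<in> SO\<^sub>d(\<int>\<^sub>p) SO\<^sub>d(\<int>[1/p])\<close>, hence \<open>h \<in> M\<^sub>0\<close>; absorbing \<open>\<beta>\<close> into \<open>G(\<int>[1/p])\<close> and
  \<open>k\<^sub>v h\<^sub>1 \<beta>\<^sup>-\<^sup>1 k\<^sub>v\<^sup>-\<^sup>1\<close> into \<open>K\<close> (which commutes with \<open>a\<^sub>v\<close>) moves it into \<open>O\<^sub>v\<^sub>,\<^sub>p\<^sub>,\<^sub>h\<close>.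

  Conversely, for \<open>h = a\<^sub>0 b\<^sub>0 \<in> M\<^sub>0\<close> the \<open>p\<close>-adic \<open>G\<^sub>2\<close>-coordinate
  \<open>(g\<^sub>v\<^sup>-\<^sup>1 a' a\<^sub>0 g\<^sub>v)(g\<^sub>v\<^sup>-\<^sup>1 b\<^sub>0 g\<^sub>v)\<close> lies in \<open>ASL\<^sub>d\<^sub>-\<^sub>1(\<rat>\<^sub>p)\<close>, because \<open>g\<^sub>v\<^sup>-\<^sup>1\<close> has last row \<open>v\<^sup>T\<close>.
  The last row of the first factor equals that of the inverse of the second, so it lies in
  \<open>\<int>\<^sub>p \<inter> \<int>[1/p] = \<int>\<close> and is primitive; completing it to some \<open>C \<in> SL\<^sub>d(\<int>)\<close> and inserting
  \<open>C\<^sup>-\<^sup>1 C\<close> between the factors splits the coordinate into \<open>ASL\<^sub>d\<^sub>-\<^sub>1(\<int>\<^sub>p) ASL\<^sub>d\<^sub>-\<^sub>1(\<int>[1/p])\<close>, which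
  puts the point into \<open>\<U>\<close>.

  Finally, if \<open>O\<^sub>v\<^sub>,\<^sub>p\<^sub>,\<^sub>h\<^sub>1\<close> and \<open>O\<^sub>v\<^sub>,\<^sub>p\<^sub>,\<^sub>h\<^sub>2\<close> meet, the real \<open>G\<^sub>1\<close>-coordinates force the connecting
  element of \<open>G(\<int>[1/p])\<close> to fix \<open>v\<close>, so \<open>h\<^sub>1\<close> and \<open>h\<^sub>2\<close> lie in the same double coset.\<close>

locale Qp_absv =
  fixes p :: nat and absv :: "'k::field_char_0 \<Rightarrow> real"
  assumes is_Qp: "is_Qp p absv" and prime_p: "prime p"
begin

lemma absv_nonneg: "absv x \<ge> 0"
  using is_Qp unfolding is_Qp_def by blast

lemma absv_eq_0_iff: "absv x = 0 \<longleftrightarrow> x = 0"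
  using is_Qp unfolding is_Qp_def by blast

lemma absv_mult: "absv (x * y) = absv x * absv y"
  using is_Qp unfolding is_Qp_def by blast

lemma absv_ultrametric: "absv (x + y) \<le> max (absv x) (absv y)"
  using is_Qp unfolding is_Qp_def by blast

lemma absv_of_nat_p: "absv (of_nat p) = 1 / real p"
  using is_Qp unfolding is_Qp_def by blast

lemma absv_of_int_coprime: "coprime n (int p) \<Longrightarrow> absv (of_int n) = 1"
  using is_Qp unfolding is_Qp_def by blast

lemma absv_one [simp]: "absv 1 = 1"
proof -
  have "absv 1 * absv 1 = absv 1 * 1"
    using absv_mult[of 1 1] by simp
  moreover have "absv 1 \<noteq> 0"
    using absv_eq_0_iff[of 1] by simp
  ultimately show ?thesis
    by simp
qed

lemma absv_zero [simp]: "absv 0 = 0"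
  using absv_eq_0_iff by simp

lemma absv_minus [simp]: "absv (- x) = absv x"
proof -
  have "absv (-1) * absv (-1) = 1"
    using absv_mult[of "-1" "-1"] by simp
  then have "(absv (-1))\<^sup>2 = 1"
    by (simp add: power2_eq_square)
  then have "absv (-1) = 1"
    using absv_nonneg[of "-1"] power2_eq_1_iff by fastforce
  then show ?thesis
    using absv_mult[of "-1" x] by simp
qed

lemma absv_power: "absv (x ^ n) = absv x ^ n"
  by (induction n) (auto simp: absv_mult)

lemma absv_of_nat_le_1: "absv (of_nat n) \<le> 1"
proof (induction n)
  case (Suc n)
  have "absv (of_nat n + 1) \<le> max (absv (of_nat n)) (absv 1)"
    by (rule absv_ultrametric)
  then show ?case
    using Suc by (simp add: add.commute)
qed simp

lemma absv_of_int_le_1: "absv (of_int n) \<le> 1"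
proof (cases "n \<ge> 0")
  case True
  then show ?thesis
    using absv_of_nat_le_1[of "nat n"] by (metis of_int_of_nat_eq int_nat_eq)
next
  case False
  then have "of_int n = - (of_nat (nat (- n)) :: 'k)"
    by simp
  then show ?thesis
    using absv_of_nat_le_1[of "nat (- n)"] by simp
qed

text \<open>\<open>\<int>[1/p] \<inter> \<int>\<^sub>p = \<int>\<close>: an element \<open>z / p\<^sup>n\<close> with \<open>z\<close> prime to \<open>p\<close> has absolute
  value \<open>p\<^sup>n\<close>, so every power of \<open>p\<close> in the denominator can be cancelled.\<close>

lemma Ints_if_Zinvp_Zp:
  assumes "q \<in> Zinvp p" and "absv (of_rat q) \<le> 1"
  shows "q \<in> \<int>"
proof -
  obtain n where "q * of_nat p ^ n \<in> \<int>"
    using assms(1) unfolding Zinvp_def by blast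
  then show ?thesis
  proof (induction n)
    case (Suc n)
    obtain z where z: "q * of_nat p ^ Suc n = of_int z"
      using Suc.prems by (auto elim: Ints_cases)
    have p1: "p > 1"
      using prime_p prime_gt_1_nat by blast
    show ?case
    proof (cases "int p dvd z")
      case True
      then obtain z' where "z = int p * z'" by blast
      then have "q * of_nat p ^ n = of_int z'"
        using z p1 by (simp add: field_simps)
      then show ?thesis
        using Suc.IH by (metis Ints_of_int)
    next
      case False
      then have "coprime z (int p)"
        using prime_p prime_imp_coprime[of "int p" z] by (simp add: coprime_commute)
      then have "1 = absv (of_rat (q * of_nat p ^ Suc n) :: 'k)"
        using absv_of_int_coprime z by (metis of_rat_of_int_eq)
      also have "\<dots> = absv (of_rat q :: 'k) * (1 / real p) ^ Suc n"
        by (simp add: of_rat_mult of_rat_power absv_mult absv_power absv_of_nat_p)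
      also have "\<dots> \<le> (1 / real p) ^ Suc n"
        using assms(2) absv_nonneg by (intro mult_left_le_one_le) auto
      also have "\<dots> < 1"
        using p1 by (intro power_Suc_less_one) auto
      finally show ?thesis by simp
    qed
  qed simp
qed

end

definition is_subring :: "'a::comm_ring_1 set \<Rightarrow> bool" where
  "is_subring R \<longleftrightarrow> (\<forall>n::int. of_int n \<in> R) \<and> (\<forall>x\<in>R. \<forall>y\<in>R. x + y \<in> R \<and> x * y \<in> R \<and> - x \<in> R)"

lemma is_subringD:
  assumes "is_subring R"
  shows "of_int n \<in> R" "0 \<in> R" "1 \<in> R" "x \<in> R \<Longrightarrow> y \<in> R \<Longrightarrow> x + y \<in> R"
    "x \<in> R \<Longrightarrow> y \<in> R \<Longrightarrow> x * y \<in> R" "x \<in> R \<Longrightarrow> - x \<in> R"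
  using assms unfolding is_subring_def by (auto, metis of_int_0, metis of_int_1)

lemma is_subring_sum:
  "is_subring R \<Longrightarrow> (\<And>i. i \<in> I \<Longrightarrow> f i \<in> R) \<Longrightarrow> sum f I \<in> R"
  by (induction I rule: infinite_finite_induct) (auto simp: is_subringD)

lemma is_subring_prod:
  "is_subring R \<Longrightarrow> (\<And>i. i \<in> I \<Longrightarrow> f i \<in> R) \<Longrightarrow> prod f I \<in> R"
  by (induction I rule: infinite_finite_induct) (auto simp: is_subringD)

lemma is_subring_UNIV: "is_subring UNIV"
  unfolding is_subring_def by simp

lemma is_subring_Zinvp: "is_subring (Zinvp p)"
proof -
  have "x + y \<in> Zinvp p \<and> x * y \<in> Zinvp p \<and> - x \<in> Zinvp p"
    if xy: "x \<in> Zinvp p" "y \<in> Zinvp p" for x y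
  proof -
    obtain n m where n: "x * of_nat p ^ n \<in> \<int>" and m: "y * of_nat p ^ m \<in> \<int>"
      using xy unfolding Zinvp_def by blast
    have pn: "(of_nat p ^ n :: rat) \<in> \<int>" "(of_nat p ^ m :: rat) \<in> \<int>"
      by auto
    have "(x + y) * of_nat p ^ (n + m)
        = (x * of_nat p ^ n) * of_nat p ^ m + (y * of_nat p ^ m) * of_nat p ^ n"
      by (simp add: power_add algebra_simps)
    moreover have "(x * y) * of_nat p ^ (n + m) = (x * of_nat p ^ n) * (y * of_nat p ^ m)"
      by (simp add: power_add algebra_simps)
    moreover have "(- x) * of_nat p ^ n = - (x * of_nat p ^ n)"
      by simp
    ultimately show ?thesis
      using n m pn unfolding Zinvp_def by (metis (mono_tags) Ints_add Ints_mult Ints_minus mem_Collect_eq)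
  qed
  moreover have "of_int n \<in> Zinvp p" for n
    unfolding Zinvp_def by (rule CollectI, rule exI[of _ 0]) simp
  ultimately show ?thesis
    unfolding is_subring_def by blast
qed

lemma (in Qp_absv) is_subring_Zp: "is_subring (Zp absv)"
proof -
  have "absv (x + y) \<le> 1" "absv (x * y) \<le> 1" if "absv x \<le> 1" "absv y \<le> 1" for x y
    using that absv_ultrametric[of x y] absv_nonneg[of x] absv_nonneg[of y]
    by (auto simp: absv_mult intro: mult_le_one)
  then show ?thesis
    unfolding is_subring_def Zp_def by (simp add: absv_of_int_le_1)
qed

lemma entries_in_mult:
  assumes "is_subring R" "A \<in> carrier_mat d d" "B \<in> carrier_mat d d"
    "entries_in d R A" "entries_in d R B"
  shows "entries_in d R (A * B)"
  using assms unfolding entries_in_def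
  by (auto simp: scalar_prod_def intro!: is_subring_sum is_subringD(5))

lemma entries_in_transpose:
  "A \<in> carrier_mat d d \<Longrightarrow> entries_in d R A \<Longrightarrow> entries_in d R (transpose_mat A)"
  unfolding entries_in_def by auto

lemma entries_in_one: "is_subring R \<Longrightarrow> entries_in d R (1\<^sub>m d)"
  unfolding entries_in_def by (auto intro: is_subringD)

lemma entries_in_of_int: "is_subring R \<Longrightarrow> A \<in> carrier_mat d d \<Longrightarrow> entries_in d R (map_mat of_int A)"
  unfolding entries_in_def by (auto intro: is_subringD)

lemma entries_in_UNIV: "entries_in d UNIV A"
  unfolding entries_in_def by auto

lemma det_in_subring:
  assumes R: "is_subring R" and A: "A \<in> carrier_mat d d" "entries_in d R A"
  shows "det A \<in> R"
proof -
  have "signof q \<in> R" for q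
    using signof_pm_one[of q] is_subringD[OF R] by auto
  moreover have "A $$ (i, q i) \<in> R" if "q permutes {0..<d}" "i \<in> {0..<d}" for q i
    using A(2) permutes_in_image[OF that(1)] that(2) unfolding entries_in_def by auto
  ultimately show ?thesis
    unfolding det_def'[OF A(1)]
    by (intro is_subring_sum[OF R] is_subringD(5)[OF R] is_subring_prod[OF R]) auto
qed

lemma entries_in_adj_mat:
  assumes R: "is_subring R" and A: "A \<in> carrier_mat d d" "entries_in d R A"
  shows "entries_in d R (adj_mat A)"
proof -
  have "det (mat_delete A j i) \<in> R" if "i < d" "j < d" for i j
    using that A by (intro det_in_subring[OF R])
      (auto simp: entries_in_def mat_delete_def intro: mat_delete_carrier)
  moreover have "(-1) ^ n \<in> R" for n
    using is_subringD(1)[OF R, of "(-1) ^ n"] by simp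
  ultimately show ?thesis
    using A unfolding entries_in_def adj_mat_def cofactor_def by (auto intro: is_subringD(5)[OF R])
qed

lemma adj_mat_inverse:
  assumes "A \<in> carrier_mat d d" "det A = 1"
  shows "A * adj_mat A = 1\<^sub>m d" "adj_mat A * A = 1\<^sub>m d" "det (adj_mat A) = 1"
  using adj_mat[OF assms(1)] det_mult[OF assms(1), of "adj_mat A"] assms(2) by auto

lemma map_vec_of_rat_of_int [simp]:
  "map_vec (of_rat :: rat \<Rightarrow> 'a::field_char_0) (map_vec of_int v) = map_vec of_int v"
  by (intro eq_vecI) auto

lemma map_mat_of_rat_of_int [simp]:
  "map_mat (of_rat :: rat \<Rightarrow> 'a::field_char_0) (map_mat of_int A) = map_mat of_int A"
  by (intro eq_matI) auto

lemma mult_right_inverse_cancel: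
  fixes A :: "'a::semiring_1 mat"
  assumes "A \<in> carrier_mat d d" "B \<in> carrier_mat d d" "A * B = 1\<^sub>m d" "X \<in> carrier_mat d d"
  shows "A * (B * X) = X"
  using assms by (simp add: assoc_mult_mat[symmetric, of A d d B d X d])

lemma SO_ptsD:
  fixes b :: "'a::field mat"
  assumes "b \<in> SO_pts d R"
  shows "b \<in> carrier_mat d d" "entries_in d R b" "b * transpose_mat b = 1\<^sub>m d"
    "transpose_mat b * b = 1\<^sub>m d" "det b = 1"
  using assms mat_mult_left_right_inverse[of b d "transpose_mat b"] unfolding SO_pts_def by auto

lemma SO_pts_mult:
  fixes a b :: "'a::field mat"
  assumes R: "is_subring R" and a: "a \<in> SO_pts d R" and b: "b \<in> SO_pts d R"
  shows "a * b \<in> SO_pts d R"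
proof -
  note A = SO_ptsD[OF a] and B = SO_ptsD[OF b]
  have "(a * b) * transpose_mat (a * b) = a * (b * (transpose_mat b * transpose_mat a))"
    using A B by (simp add: transpose_mult assoc_mult_mat[of _ d d _ d _ d])
  also have "\<dots> = 1\<^sub>m d"
    using A B by (simp add: mult_right_inverse_cancel[of b d])
  finally show ?thesis
    using A B entries_in_mult[OF R] by (auto simp: SO_pts_def det_mult)
qed

lemma SO_pts_transpose:
  fixes a :: "'a::field mat"
  assumes "a \<in> SO_pts d R"
  shows "transpose_mat a \<in> SO_pts d R"
  using SO_ptsD[OF assms] entries_in_transpose[of a d R] det_transpose[of a d]
  unfolding SO_pts_def by simp

lemma SO_pts_one: "is_subring R \<Longrightarrow> 1\<^sub>m d \<in> SO_pts d R"
  unfolding SO_pts_def using entries_in_one by auto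

lemma SO_pts_mono: "R \<subseteq> S \<Longrightarrow> a \<in> SO_pts d R \<Longrightarrow> a \<in> SO_pts d S"
  unfolding SO_pts_def entries_in_def by auto

lemma SO_pts_of_rat:
  assumes "b \<in> SO_pts d R"
  shows "map_mat (of_rat :: rat \<Rightarrow> 'a::field_char_0) b \<in> SO_pts d UNIV"
proof -
  have b: "b \<in> carrier_mat d d" "b * transpose_mat b = 1\<^sub>m d" "det b = 1"
    using assms unfolding SO_pts_def by auto
  have "map_mat (of_rat :: rat \<Rightarrow> 'a) b * transpose_mat (map_mat of_rat b)
      = map_mat of_rat (b * transpose_mat b)"
    using b(1) by (simp add: of_rat_hom.mat_hom_mult map_mat_transpose)
  also have "\<dots> = 1\<^sub>m d"
    using b(2) by (simp add: of_rat_hom.mat_hom_one)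
  finally show ?thesis
    using b unfolding SO_pts_def by (auto simp: entries_in_UNIV)
qed

lemma H_ptsD:
  "b \<in> H_pts d v R \<Longrightarrow> b \<in> SO_pts d R"
  "b \<in> H_pts d v R \<Longrightarrow> b *\<^sub>v map_vec of_int v = map_vec of_int v"
  unfolding H_pts_def by auto

lemma H_pts_carrier: "b \<in> H_pts d v R \<Longrightarrow> b \<in> carrier_mat d d"
  unfolding H_pts_def SO_pts_def by auto

lemma orthogonal_transpose_fixes:
  fixes b :: "'a::comm_ring_1 mat"
  assumes "b \<in> carrier_mat d d" "transpose_mat b * b = 1\<^sub>m d" "x \<in> carrier_vec d" "b *\<^sub>v x = x"
  shows "transpose_mat b *\<^sub>v x = x"
proof -
  have "transpose_mat b *\<^sub>v x = transpose_mat b *\<^sub>v (b *\<^sub>v x)"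
    using assms(4) by simp
  also have "\<dots> = (transpose_mat b * b) *\<^sub>v x"
    using assms(1,3) by (simp add: assoc_mult_mat_vec[of _ d d b d x])
  finally show ?thesis
    using assms(2,3) by simp
qed

lemma H_pts_mult:
  fixes a b :: "'a::field_char_0 mat"
  assumes R: "is_subring R" and a: "a \<in> H_pts d v R" and b: "b \<in> H_pts d v R"
    and v: "v \<in> carrier_vec d"
  shows "a * b \<in> H_pts d v R"
proof -
  have "(a * b) *\<^sub>v map_vec of_int v = a *\<^sub>v (b *\<^sub>v map_vec of_int v)"
    using H_pts_carrier[OF a] H_pts_carrier[OF b] v by (simp add: assoc_mult_mat_vec)
  then show ?thesis
    using SO_pts_mult[OF R H_ptsD(1)[OF a] H_ptsD(1)[OF b]] H_ptsD(2)[OF a] H_ptsD(2)[OF b]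
    unfolding H_pts_def by auto
qed

lemma H_pts_transpose:
  fixes a :: "'a::field_char_0 mat"
  assumes a: "a \<in> H_pts d v R" and v: "v \<in> carrier_vec d"
  shows "transpose_mat a \<in> H_pts d v R"
proof -
  note A = SO_ptsD[OF H_ptsD(1)[OF a]]
  have "transpose_mat a *\<^sub>v map_vec of_int v = map_vec of_int v"
    using orthogonal_transpose_fixes[OF A(1) A(4) _ H_ptsD(2)[OF a]] v by simp
  then show ?thesis
    using SO_pts_transpose[OF H_ptsD(1)[OF a]] unfolding H_pts_def by simp
qed

lemma H_pts_one: "is_subring R \<Longrightarrow> v \<in> carrier_vec d \<Longrightarrow> 1\<^sub>m d \<in> H_pts d v R"
  unfolding H_pts_def using SO_pts_one by auto

lemma H_pts_mono: "R \<subseteq> S \<Longrightarrow> a \<in> H_pts d v R \<Longrightarrow> a \<in> H_pts d v S"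
  unfolding H_pts_def using SO_pts_mono by auto

lemma of_rat_mult_of_int_vec:
  assumes "b \<in> carrier_mat d d" "v \<in> carrier_vec d"
  shows "map_mat (of_rat :: rat \<Rightarrow> 'a::field_char_0) b *\<^sub>v map_vec of_int v
       = map_vec of_rat (b *\<^sub>v map_vec of_int v)"
  using assms by (intro eq_vecI) (auto simp: scalar_prod_def of_rat_sum of_rat_mult)

lemma H_pts_of_rat:
  assumes b: "b \<in> H_pts d v R" and v: "v \<in> carrier_vec d"
  shows "map_mat (of_rat :: rat \<Rightarrow> 'a::field_char_0) b \<in> H_pts d v UNIV"
proof -
  have "map_mat (of_rat :: rat \<Rightarrow> 'a) b *\<^sub>v map_vec of_int v = map_vec of_int v"
    using of_rat_mult_of_int_vec[OF H_pts_carrier[OF b] v] H_ptsD(2)[OF b] by simp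
  then show ?thesis
    using SO_pts_of_rat[OF H_ptsD(1)[OF b]] unfolding H_pts_def by simp
qed

lemma H_pts_if_of_rat:
  assumes b: "b \<in> SO_pts d R" and v: "v \<in> carrier_vec d"
    and bv: "map_mat (of_rat :: rat \<Rightarrow> 'a::field_char_0) b \<in> H_pts d v UNIV"
  shows "b \<in> H_pts d v R"
proof -
  have "map_vec (of_rat :: rat \<Rightarrow> 'a) (b *\<^sub>v map_vec of_int v) = map_vec of_int v"
    using H_ptsD(2)[OF bv] of_rat_mult_of_int_vec[OF SO_ptsD(1)[OF b] v] by metis
  then have "b *\<^sub>v map_vec of_int v = map_vec of_int v"
    by (intro of_rat_hom.vec_hom_inj) simp
  then show ?thesis
    using b unfolding H_pts_def by blast
qed

definition last_row_unit :: "nat \<Rightarrow> 'a::comm_ring_1 mat \<Rightarrow> bool" where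
  "last_row_unit d M \<longleftrightarrow> (\<forall>j<d. M $$ (d-1, j) = (if j = d-1 then 1 else 0))"

lemma last_row_unit_mult_left:
  assumes "X \<in> carrier_mat d d" "last_row_unit d X" "Z \<in> carrier_mat d n" "j < n" "d \<ge> 1"
  shows "(X * Z) $$ (d-1, j) = Z $$ (d-1, j)"
proof -
  have "(X * Z) $$ (d-1, j) = (\<Sum>k\<in>{0..<d}. X $$ (d-1,k) * Z $$ (k,j))"
    using assms by (simp add: scalar_prod_def)
  also have "\<dots> = (\<Sum>k\<in>{0..<d}. (if k = d-1 then Z $$ (d-1,j) else 0))"
    using assms(2) unfolding last_row_unit_def by (intro sum.cong) auto
  finally show ?thesis
    using assms(5) by simp
qed

lemma last_row_unit_mult:
  assumes "X \<in> carrier_mat d d" "last_row_unit d X" "Z \<in> carrier_mat d d" "last_row_unit d Z" "d \<ge> 1"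
  shows "last_row_unit d (X * Z)"
  using last_row_unit_mult_left[OF assms(1,2,3) _ assms(5)] assms(4) unfolding last_row_unit_def by auto

lemma last_row_unit_right_inverse:
  assumes "X \<in> carrier_mat d d" "last_row_unit d X" "Z \<in> carrier_mat d d" "X * Z = 1\<^sub>m d" "d \<ge> 1"
  shows "last_row_unit d Z"
proof -
  have "Z $$ (d-1, j) = (if j = d-1 then 1 else 0)" if "j < d" for j
    using last_row_unit_mult_left[OF assms(1,2,3) that assms(5)] assms(4,5) that by auto
  then show ?thesis
    unfolding last_row_unit_def by blast
qed

lemma last_row_unit_of_rat:
  "X \<in> carrier_mat d d \<Longrightarrow> last_row_unit d X \<Longrightarrow>
    last_row_unit d (map_mat (of_rat :: rat \<Rightarrow> 'a::field_char_0) X)"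
  unfolding last_row_unit_def by auto

lemma det_last_row_unit:
  fixes M :: "'a::comm_ring_1 mat"
  assumes M: "M \<in> carrier_mat d d" and lr: "last_row_unit d M" and d: "d \<ge> 1"
  shows "det M = det (mat (d-1) (d-1) (\<lambda>(i,j). M $$ (i,j)))"
proof -
  have "det M = (\<Sum>j<d. M $$ (d-1,j) * cofactor M (d-1) j)"
    using laplace_expansion_row[OF M] d by simp
  also have "\<dots> = (\<Sum>j<d. if j = d-1 then cofactor M (d-1) (d-1) else 0)"
    using lr unfolding last_row_unit_def by (intro sum.cong) auto
  also have "\<dots> = det (mat_delete M (d-1) (d-1))"
    using d unfolding cofactor_def by (simp add: mult_2[symmetric] power_mult)
  also have "mat_delete M (d-1) (d-1) = mat (d-1) (d-1) (\<lambda>(i,j). M $$ (i,j))"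
    using M unfolding mat_delete_def by (intro eq_matI) auto
  finally show ?thesis .
qed

lemma ASL_pts_iff:
  assumes "d \<ge> 1"
  shows "M \<in> ASL_pts d R \<longleftrightarrow>
    M \<in> carrier_mat d d \<and> entries_in d R M \<and> last_row_unit d M \<and> det M = 1"
  using assms det_last_row_unit[of M d] unfolding ASL_pts_def last_row_unit_def by auto

lemma ASL_pts_mult:
  assumes R: "is_subring R" and a: "a \<in> ASL_pts d R" and b: "b \<in> ASL_pts d R" and d: "d \<ge> 1"
  shows "a * b \<in> ASL_pts d R"
proof -
  note A = a[unfolded ASL_pts_iff[OF d]] and B = b[unfolded ASL_pts_iff[OF d]]
  show ?thesis
    unfolding ASL_pts_iff[OF d]
    using A B entries_in_mult[OF R] last_row_unit_mult[OF _ _ _ _ d] det_mult[of a d b] by auto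
qed

lemma ASL_pts_one: "is_subring R \<Longrightarrow> d \<ge> 1 \<Longrightarrow> 1\<^sub>m d \<in> ASL_pts d R"
  by (auto simp: ASL_pts_iff entries_in_one last_row_unit_def)

lemma ASL_pts_of_rat:
  "d \<ge> 1 \<Longrightarrow> b \<in> ASL_pts d R \<Longrightarrow> map_mat (of_rat :: rat \<Rightarrow> 'a::field_char_0) b \<in> ASL_pts d UNIV"
  by (auto simp: ASL_pts_iff entries_in_UNIV last_row_unit_of_rat)

lemma ASL_pts_adj_mat:
  assumes R: "is_subring R" and b: "b \<in> ASL_pts d R" and d: "d \<ge> 1"
  shows "adj_mat b \<in> ASL_pts d R" "b * adj_mat b = 1\<^sub>m d" "adj_mat b * b = 1\<^sub>m d"
proof -
  note B = b[unfolded ASL_pts_iff[OF d]]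
  show "b * adj_mat b = 1\<^sub>m d" "adj_mat b * b = 1\<^sub>m d"
    using adj_mat_inverse[of b d] B by auto
  moreover have "adj_mat b \<in> carrier_mat d d" "det (adj_mat b) = 1"
    using adj_mat(1)[of b d] adj_mat_inverse(3)[of b d] B by auto
  ultimately show "adj_mat b \<in> ASL_pts d R"
    unfolding ASL_pts_iff[OF d]
    using B entries_in_adj_mat[OF R] last_row_unit_right_inverse[OF _ _ _ _ d] by auto
qed

section \<open>Completing a primitive integer row to a matrix in \<open>SL\<^sub>d(\<int>)\<close>\<close>

definition primitive_row :: "nat \<Rightarrow> (nat \<Rightarrow> int) \<Rightarrow> bool" where
  "primitive_row d r \<longleftrightarrow> (\<forall>n::int. (\<forall>i<d. n dvd r i) \<longrightarrow> n = 1 \<or> n = -1)"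

definition SL_last_row :: "nat \<Rightarrow> (nat \<Rightarrow> int) \<Rightarrow> bool" where
  "SL_last_row d r \<longleftrightarrow> (\<exists>C :: int mat. C \<in> carrier_mat d d \<and> det C = 1 \<and> (\<forall>j<d. C $$ (d-1, j) = r j))"

lemma SL_last_row_cong: "SL_last_row d r \<Longrightarrow> (\<And>j. j < d \<Longrightarrow> r j = r' j) \<Longrightarrow> SL_last_row d r'"
  unfolding SL_last_row_def by metis

lemma SL_last_row_last_unit: "d \<ge> 1 \<Longrightarrow> SL_last_row d (\<lambda>j. if j = d-1 then 1 else 0)"
  unfolding SL_last_row_def by (intro exI[of _ "1\<^sub>m d"]) auto

lemma SL_last_row_add:
  assumes r: "SL_last_row d r" and ij: "i < d" "j < d" "i \<noteq> j"
  shows "SL_last_row d (r(i := r i + c * r j))"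
proof -
  obtain C where C: "C \<in> carrier_mat d d" "det C = 1" "\<forall>j<d. C $$ (d-1, j) = r j"
    using r unfolding SL_last_row_def by blast
  define E where "E = addrow_mat d c j i"
  have E: "E \<in> carrier_mat d d" "det E = 1"
    unfolding E_def using ij det_addrow_mat[of j i d c] by auto
  have "(C * E) $$ (d-1, b) = (r(i := r i + c * r j)) b" if b: "b < d" for b
  proof -
    have "(C * E) $$ (d-1, b) = (\<Sum>a\<in>{0..<d}. C $$ (d-1,a) * E $$ (a,b))"
      using C E b ij by (simp add: scalar_prod_def)
    also have "\<dots> = (\<Sum>a\<in>{0..<d}. (if a = b then C $$ (d-1,a) else 0)
                     + (if a = j then (if b = i then c * C $$ (d-1,j) else 0) else 0))"
      using b ij unfolding E_def by (intro sum.cong) auto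
    also have "\<dots> = C $$ (d-1,b) + (if b = i then c * C $$ (d-1,j) else 0)"
      using b ij by (simp add: sum.distrib)
    finally show ?thesis
      using C(3) b ij by (auto simp: mult.commute)
  qed
  then show ?thesis
    unfolding SL_last_row_def using C E det_mult[OF C(1) E(1)]
    by (intro exI[of _ "C * E"]) auto
qed

lemma SL_last_row_unit_off_last:
  assumes d: "d \<ge> 2" and i: "i < d" "i \<noteq> d-1" and u: "u = 1 \<or> u = -1"
  shows "SL_last_row d (\<lambda>j. if j = i then u else 0)"
proof -
  let ?e = "\<lambda>j::nat. if j = d-1 then 1 else (0::int)"
  let ?r = "?e(i := ?e i + u * ?e (d-1))"
  have e: "SL_last_row d ?e"
    using d by (intro SL_last_row_last_unit) auto
  have r: "SL_last_row d ?r"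
    by (rule SL_last_row_add[OF e, of i "d-1" u]) (use i d in auto)
  have "SL_last_row d (?r(d-1 := ?r (d-1) + (-u) * ?r i))"
    by (rule SL_last_row_add[OF r, of "d-1" i "-u"]) (use i d in auto)
  then show ?thesis
    by (rule SL_last_row_cong) (use u i in auto)
qed

lemma SL_last_row_unit:
  assumes d: "d \<ge> 2" and i: "i < d" and u: "u = 1 \<or> u = -1"
  shows "SL_last_row d (\<lambda>j. if j = i then u else 0)"
proof (cases "i = d-1")
  case True
  show ?thesis
  proof (cases "u = 1")
    case True
    then show ?thesis
      using SL_last_row_last_unit[of d] d \<open>i = d-1\<close> by (simp cong: if_cong)
  next
    case False
    let ?f = "\<lambda>j::nat. if j = 0 then -1 else (0::int)"
    let ?r = "?f(d-1 := ?f (d-1) + 1 * ?f 0)"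
    have f: "SL_last_row d ?f"
      using SL_last_row_unit_off_last[of d 0 "-1"] d by auto
    have r: "SL_last_row d ?r"
      by (rule SL_last_row_add[OF f, of "d-1" 0 1]) (use d in auto)
    have "SL_last_row d (?r(0 := ?r 0 + (-1) * ?r (d-1)))"
      by (rule SL_last_row_add[OF r, of 0 "d-1" "-1"]) (use d in auto)
    then show ?thesis
      by (rule SL_last_row_cong) (use False u \<open>i = d-1\<close> d in auto)
  qed
next
  case False
  show ?thesis
    using SL_last_row_unit_off_last[OF d i False u] .
qed

lemma primitive_row_add:
  assumes r: "primitive_row d r" and ij: "i < d" "j < d" "i \<noteq> j"
  shows "primitive_row d (r(i := r i + c * r j))"
  unfolding primitive_row_def
proof (intro allI impI)
  fix n assume n: "\<forall>k<d. n dvd (r(i := r i + c * r j)) k"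
  then have "n dvd r j" "n dvd r i + c * r j"
    using ij by (metis fun_upd_other fun_upd_same)+
  then have "n dvd r i"
    by (metis dvd_add_left_iff dvd_mult)
  then have "\<forall>k<d. n dvd r k"
    using n by (metis fun_upd_other)
  then show "n = 1 \<or> n = -1"
    using r unfolding primitive_row_def by blast
qed

lemma SL_last_row_if_primitive_single:
  assumes d: "d \<ge> 2" and r: "primitive_row d r" and i: "i < d"
    and single: "\<And>j. j < d \<Longrightarrow> j \<noteq> i \<Longrightarrow> r j = 0"
  shows "SL_last_row d r"
proof -
  have "\<forall>k<d. r i dvd r k"
    using single by (metis dvd_0_right dvd_refl)
  then have "r i = 1 \<or> r i = -1"
    using r unfolding primitive_row_def by blast
  then have "SL_last_row d (\<lambda>j. if j = i then r i else 0)"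
    by (rule SL_last_row_unit[OF d i])
  then show ?thesis
    by (rule SL_last_row_cong) (simp add: single)
qed

text \<open>Euclid's algorithm on the entries: subtracting a multiple of a smaller nonzero entry
  from a larger one decreases \<open>\<Sum>\<^sub>k |r k|\<close> until a single nonzero entry is left.\<close>

lemma SL_last_row_if_primitive:
  assumes d: "d \<ge> 2" and r: "primitive_row d r"
  shows "SL_last_row d r"
proof -
  have "(\<Sum>k<d. nat \<bar>r k\<bar>) = m \<Longrightarrow> primitive_row d r \<Longrightarrow> SL_last_row d r" for m
  proof (induction m arbitrary: r rule: less_induct)
    case (less m r)
    show ?case
    proof (cases "\<exists>i j. i < d \<and> j < d \<and> i \<noteq> j \<and> r i \<noteq> 0 \<and> r j \<noteq> 0 \<and> \<bar>r j\<bar> \<le> \<bar>r i\<bar>")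
      case True
      then obtain i j where ij: "i < d" "j < d" "i \<noteq> j" "r i \<noteq> 0" "r j \<noteq> 0" "\<bar>r j\<bar> \<le> \<bar>r i\<bar>"
        by blast
      define s where "s = sgn (r i) * sgn (r j)"
      define r' where "r' = r(i := r i + (- s) * r j)"
      have r'i: "\<bar>r' i\<bar> = \<bar>r i\<bar> - \<bar>r j\<bar>"
        unfolding r'_def s_def using ij by (auto simp: sgn_if abs_if)
      have "(\<Sum>k<d. nat \<bar>r' k\<bar>) < (\<Sum>k<d. nat \<bar>r k\<bar>)"
      proof (rule sum_strict_mono_ex1)
        show "\<forall>k\<in>{..<d}. nat \<bar>r' k\<bar> \<le> nat \<bar>r k\<bar>"
          using r'i unfolding r'_def by auto
        show "\<exists>k\<in>{..<d}. nat \<bar>r' k\<bar> < nat \<bar>r k\<bar>"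
          using r'i ij by (intro bexI[of _ i]) auto
      qed simp
      moreover have "primitive_row d r'"
        unfolding r'_def using primitive_row_add[OF less.prems(2) ij(1-3)] .
      ultimately have "SL_last_row d r'"
        using less.IH less.prems(1) by blast
      then have "SL_last_row d (r'(i := r' i + s * r' j))"
        by (rule SL_last_row_add[of d r' i j s]) (use ij in auto)
      moreover have "r'(i := r' i + s * r' j) = r"
        unfolding r'_def using ij by auto
      ultimately show ?thesis
        by simp
    next
      case False
      then have single: "\<And>i j. i < d \<Longrightarrow> j < d \<Longrightarrow> i \<noteq> j \<Longrightarrow> r i \<noteq> 0 \<Longrightarrow> r j = 0"
        by (metis linorder_le_cases)
      have "\<not> (\<forall>k<d. (2::int) dvd r k)"
        using less.prems(2) unfolding primitive_row_def by fastforce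
      then obtain i where i: "i < d" "r i \<noteq> 0"
        by fastforce
      show ?thesis
        using SL_last_row_if_primitive_single[OF d less.prems(2) i(1)] single[OF i(1)] i(2) by blast
    qed
  qed
  then show ?thesis
    using r by blast
qed

lemma primitive_nonzero:
  assumes "primitive d v"
  obtains i where "i < d" "v $ i \<noteq> 0"
proof -
  have "\<not> (\<forall>i<d. (2::int) dvd v $ i)"
    using assms unfolding primitive_def by fastforce
  then show ?thesis
    using that by fastforce
qed

lemma primitive_scalar_prod_self_pos:
  assumes "primitive d v"
  shows "v \<bullet> v > 0"
proof -
  obtain i where "i < d" "v $ i \<noteq> 0"
    using assms by (rule primitive_nonzero)
  then have "(\<Sum>j\<in>{0..<d}. (v $ j)\<^sup>2) > 0"
    by (intro sum_pos2[of _ i]) auto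
  moreover have "dim_vec v = d"
    using assms unfolding primitive_def by simp
  ultimately show ?thesis
    by (simp add: scalar_prod_def power2_eq_square)
qed

definition unit_cols_last :: "nat \<Rightarrow> 'a::zero_neq_one vec \<Rightarrow> 'a mat" where
  "unit_cols_last d y = mat d d (\<lambda>(i,j). if j < d-1 then (if i = j then 1 else 0) else y $ i)"

lemma det_unit_cols_last:
  fixes y :: "'a::comm_ring_1 vec"
  assumes "d \<ge> 1"
  shows "det (unit_cols_last d y) = y $ (d-1)"
proof -
  have "upper_triangular (unit_cols_last d y)"
    unfolding upper_triangular_def unit_cols_last_def by auto
  moreover have "unit_cols_last d y \<in> carrier_mat d d"
    unfolding unit_cols_last_def by simp
  ultimately have "det (unit_cols_last d y) = (\<Prod>i = 0..<d. unit_cols_last d y $$ (i,i))"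
    using det_upper_triangular[of "unit_cols_last d y" d] by (simp add: prod_list_diag_prod)
  also have "\<dots> = (\<Prod>i = 0..<d. if i = d-1 then y $ (d-1) else 1)"
    unfolding unit_cols_last_def by (intro prod.cong) auto
  finally show ?thesis
    using assms by simp
qed

lemma mult_unit_cols_last:
  fixes A :: "'a::comm_ring_1 mat"
  assumes A: "A \<in> carrier_mat d d" and y: "y \<in> carrier_vec d"
  shows "A * unit_cols_last d y = mat d d (\<lambda>(i,j). if j < d-1 then A $$ (i,j) else (A *\<^sub>v y) $ i)"
proof (rule eq_matI)
  fix i j assume "i < dim_row (mat d d (\<lambda>(i,j). if j < d-1 then A $$ (i,j) else (A *\<^sub>v y) $ i))"
    "j < dim_col (mat d d (\<lambda>(i,j). if j < d-1 then A $$ (i,j) else (A *\<^sub>v y) $ i))"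
  then have ij: "i < d" "j < d"
    by auto
  have "col (unit_cols_last d y) j = (if j < d-1 then unit_vec d j else y)"
    unfolding unit_cols_last_def using ij y by (intro eq_vecI) auto
  then show "(A * unit_cols_last d y) $$ (i,j)
      = mat d d (\<lambda>(i,j). if j < d-1 then A $$ (i,j) else (A *\<^sub>v y) $ i) $$ (i,j)"
    using ij A by (auto simp: unit_cols_last_def)
qed (use A in \<open>auto simp: unit_cols_last_def\<close>)

locale gv_basis =
  fixes d :: nat and v :: "int vec" and g :: "int mat"
  assumes d: "d \<ge> 2" and primitive_v: "primitive d v" and is_gv: "is_gv d v g"
begin

lemma d_ge_1: "d \<ge> 1"
  using d by simp

lemma v_carrier: "v \<in> carrier_vec d"
  using primitive_v unfolding primitive_def by simp

lemma g_carrier: "g \<in> carrier_mat d d" and det_g: "det g = 1"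
  using is_gv unfolding is_gv_def by auto

lemma adj_g_carrier: "adj_mat g \<in> carrier_mat d d"
  using adj_mat(1)[OF g_carrier] .

lemma g_adj_g: "g * adj_mat g = 1\<^sub>m d" and adj_g_g: "adj_mat g * g = 1\<^sub>m d"
  using adj_mat_inverse[OF g_carrier det_g] by auto

lemma transpose_g_mult_v_eq: "transpose_mat g *\<^sub>v v = (col g (d-1) \<bullet> v) \<cdot>\<^sub>v unit_vec d (d-1)"
proof -
  have "col g j \<bullet> v = 0" if "j < d-1" for j
    using is_gv that unfolding is_gv_def by blast
  then show ?thesis
    using g_carrier v_carrier d by (intro eq_vecI) (auto simp: unit_vec_def)
qed

lemma v_eq_smult_adj_g_row:
  assumes l: "l < d"
  shows "v $ l = (col g (d-1) \<bullet> v) * adj_mat g $$ (d-1, l)"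
proof -
  define c where "c = col g (d-1) \<bullet> v"
  have "transpose_mat (adj_mat g) * transpose_mat g = 1\<^sub>m d"
    by (metis transpose_mult[OF g_carrier adj_g_carrier] g_adj_g transpose_one)
  then have "v = transpose_mat (adj_mat g) *\<^sub>v (transpose_mat g *\<^sub>v v)"
    using g_carrier adj_g_carrier v_carrier by (simp add: assoc_mult_mat_vec[symmetric, of _ d d _ d])
  also have "\<dots> = transpose_mat (adj_mat g) *\<^sub>v (c \<cdot>\<^sub>v unit_vec d (d-1))"
    unfolding c_def transpose_g_mult_v_eq ..
  finally have "v $ l = (\<Sum>j\<in>{0..<d}. adj_mat g $$ (j, l) * (c * (if j = d-1 then 1 else 0)))"
    using l adj_g_carrier by (simp add: scalar_prod_def unit_vec_def)
  also have "\<dots> = (\<Sum>j\<in>{0..<d}. if j = d-1 then c * adj_mat g $$ (d-1, l) else 0)"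
    by (intro sum.cong) auto
  finally show ?thesis
    unfolding c_def using d by simp
qed

text \<open>The orientation condition on \<open>g\<^sub>v\<close> fixes the sign: with \<open>y = g\<^sub>v\<^sup>-\<^sup>1 v\<close>, the matrix
  \<open>(b\<^sub>1, \<dots>, b\<^sub>d\<^sub>-\<^sub>1, v)\<close> equals \<open>g\<^sub>v (e\<^sub>1, \<dots>, e\<^sub>d\<^sub>-\<^sub>1, y)\<close>, so its determinant is \<open>y\<^sub>d\<close>,
  while \<open>v \<bullet> v = (g\<^sub>v\<^sup>T v) \<bullet> y = (col g (d-1) \<bullet> v) y\<^sub>d\<close>.\<close>

lemma col_last_g_v_pos: "col g (d-1) \<bullet> v > 0"
proof -
  define y where "y = adj_mat g *\<^sub>v v"
  have y: "y \<in> carrier_vec d"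
    unfolding y_def using adj_g_carrier v_carrier by simp
  have gy: "g *\<^sub>v y = v"
    unfolding y_def using g_carrier adj_g_carrier v_carrier g_adj_g
    by (simp add: assoc_mult_mat_vec[symmetric, of _ d d _ d])
  define c where "c = col g (d-1) \<bullet> v"
  have "v \<bullet> v = (transpose_mat g *\<^sub>v v) \<bullet> y"
    using transpose_vec_mult_scalar[OF g_carrier y v_carrier] gy by simp
  also have "\<dots> = (c \<cdot>\<^sub>v unit_vec d (d-1)) \<bullet> y"
    unfolding c_def transpose_g_mult_v_eq ..
  also have "\<dots> = (\<Sum>i\<in>{0..<d}. c * (if i = d-1 then 1 else 0) * y $ i)"
    using y by (simp add: scalar_prod_def)
  also have "\<dots> = (\<Sum>i\<in>{0..<d}. if i = d-1 then c * y $ (d-1) else 0)"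
    by (intro sum.cong) auto
  finally have vv: "v \<bullet> v = c * y $ (d-1)"
    using d by simp
  have "det (g * unit_cols_last d y) = y $ (d-1)"
    using det_mult[OF g_carrier, of "unit_cols_last d y"] det_g det_unit_cols_last[OF d_ge_1]
    by (simp add: unit_cols_last_def)
  then have "y $ (d-1) > 0"
    using is_gv unfolding is_gv_def mult_unit_cols_last[OF g_carrier y] gy by simp
  then show ?thesis
    using vv primitive_scalar_prod_self_pos[OF primitive_v] unfolding c_def
    by (simp add: zero_less_mult_iff)
qed

lemma col_last_g_v: "col g (d-1) \<bullet> v = 1"
proof -
  have "\<forall>l<d. (col g (d-1) \<bullet> v) dvd v $ l"
    using v_eq_smult_adj_g_row by simp
  then have "col g (d-1) \<bullet> v = 1 \<or> col g (d-1) \<bullet> v = -1"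
    using primitive_v unfolding primitive_def by blast
  then show ?thesis
    using col_last_g_v_pos by auto
qed

lemma transpose_g_mult_v: "transpose_mat g *\<^sub>v v = unit_vec d (d-1)"
  using transpose_g_mult_v_eq col_last_g_v by simp

lemma adj_g_last_row: "l < d \<Longrightarrow> adj_mat g $$ (d-1, l) = v $ l"
  using v_eq_smult_adj_g_row col_last_g_v by simp

lemma of_int_g_carrier: "(map_mat of_int g :: 'a::comm_ring_1 mat) \<in> carrier_mat d d"
  using g_carrier by simp

lemma of_int_adj_g_carrier: "(map_mat of_int (adj_mat g) :: 'a::comm_ring_1 mat) \<in> carrier_mat d d"
  using adj_g_carrier by simp

lemma of_int_g_adj_g: "(map_mat of_int g :: 'a::comm_ring_1 mat) * map_mat of_int (adj_mat g) = 1\<^sub>m d"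
  and of_int_adj_g_g: "(map_mat of_int (adj_mat g) :: 'a::comm_ring_1 mat) * map_mat of_int g = 1\<^sub>m d"
  using g_adj_g adj_g_g g_carrier adj_g_carrier
  by (metis of_int_hom.mat_hom_mult of_int_hom.mat_hom_one)+

lemma of_int_g_adj_g_cancel:
  "X \<in> carrier_mat d d \<Longrightarrow> (map_mat of_int g :: 'a::comm_ring_1 mat) * (map_mat of_int (adj_mat g) * X) = X"
  using mult_right_inverse_cancel[OF of_int_g_carrier of_int_adj_g_carrier of_int_g_adj_g] .

lemma of_int_adj_g_g_cancel:
  "X \<in> carrier_mat d d \<Longrightarrow> (map_mat of_int (adj_mat g) :: 'a::comm_ring_1 mat) * (map_mat of_int g * X) = X"
  using mult_right_inverse_cancel[OF of_int_adj_g_carrier of_int_g_carrier of_int_adj_g_g] .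

text \<open>\<open>g_conj b\<close> is \<open>g\<^sub>v\<^sup>-\<^sup>1 b g\<^sub>v\<close>: since \<open>det g\<^sub>v = 1\<close>, the adjugate is the inverse.\<close>

definition g_conj :: "'a::comm_ring_1 mat \<Rightarrow> 'a mat" where
  "g_conj b = map_mat of_int (adj_mat g) * b * map_mat of_int g"

lemma g_conj_carrier: "b \<in> carrier_mat d d \<Longrightarrow> g_conj b \<in> carrier_mat d d"
  unfolding g_conj_def using of_int_g_carrier of_int_adj_g_carrier by simp

lemma g_conj_mult:
  fixes a b :: "'a::comm_ring_1 mat"
  assumes "a \<in> carrier_mat d d" "b \<in> carrier_mat d d"
  shows "g_conj (a * b) = g_conj a * g_conj b"
proof -
  have "g_conj a * g_conj b
      = map_mat of_int (adj_mat g) * a * (map_mat of_int g * (map_mat of_int (adj_mat g) * (b * map_mat of_int g)))"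
    unfolding g_conj_def using assms of_int_g_carrier of_int_adj_g_carrier
    by (simp add: assoc_mult_mat[of _ d d _ d _ d])
  also have "\<dots> = g_conj (a * b)"
    unfolding g_conj_def using assms of_int_g_carrier of_int_adj_g_carrier
    by (simp add: of_int_g_adj_g_cancel assoc_mult_mat[of _ d d _ d _ d])
  finally show ?thesis ..
qed

lemma intertwines_iff_g_conj:
  fixes m b :: "'a::comm_ring_1 mat"
  assumes "m \<in> carrier_mat d d" "b \<in> carrier_mat d d"
  shows "map_mat of_int g * m = b * map_mat of_int g \<longleftrightarrow> m = g_conj b"
proof
  assume gm: "map_mat of_int g * m = b * map_mat of_int g"
  have "m = map_mat of_int (adj_mat g) * (map_mat of_int g * m)"
    using of_int_adj_g_g_cancel[OF assms(1)] ..
  then show "m = g_conj b"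
    unfolding g_conj_def gm using assms of_int_g_carrier of_int_adj_g_carrier
    by (simp add: assoc_mult_mat[of _ d d _ d _ d])
next
  assume "m = g_conj b"
  then show "map_mat of_int g * m = b * map_mat of_int g"
    unfolding g_conj_def using assms of_int_g_carrier of_int_adj_g_carrier
    by (simp add: of_int_g_adj_g_cancel assoc_mult_mat[of _ d d _ d _ d])
qed

lemma of_rat_g_conj:
  assumes "b \<in> carrier_mat d d"
  shows "map_mat (of_rat :: rat \<Rightarrow> 'a::field_char_0) (g_conj b) = g_conj (map_mat of_rat b)"
  unfolding g_conj_def using assms of_int_g_carrier of_int_adj_g_carrier
  by (simp add: of_rat_hom.mat_hom_mult[of _ d d _ d])

lemma entries_in_g_conj:
  "is_subring R \<Longrightarrow> b \<in> carrier_mat d d \<Longrightarrow> entries_in d R b \<Longrightarrow> entries_in d R (g_conj b)"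
  unfolding g_conj_def using g_carrier adj_g_carrier
  by (intro entries_in_mult entries_in_of_int) (auto simp: of_int_g_carrier of_int_adj_g_carrier)

lemma det_g_conj:
  fixes b :: "'a::comm_ring_1 mat"
  assumes "b \<in> carrier_mat d d"
  shows "det (g_conj b) = det b"
proof -
  have "det (map_mat of_int (adj_mat g) :: 'a mat) * det (map_mat of_int g) = 1"
    using det_mult[OF of_int_adj_g_carrier of_int_g_carrier] of_int_adj_g_g by (metis det_one)
  then show ?thesis
    unfolding g_conj_def using assms of_int_g_carrier of_int_adj_g_carrier
    by (simp add: det_mult[of _ d] mult_carrier_mat[of _ d d _ d] ac_simps)
qed

text \<open>The last row of \<open>g\<^sub>v\<^sup>-\<^sup>1\<close> is \<open>v\<^sup>T\<close>, and
  \<open>v\<^sup>T b g\<^sub>v = v\<^sup>T g\<^sub>v = e\<^sub>d\<^sup>T\<close>.\<close>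

lemma last_row_unit_g_conj:
  fixes b :: "'a::comm_ring_1 mat"
  assumes b: "b \<in> carrier_mat d d" and bv: "transpose_mat b *\<^sub>v map_vec of_int v = map_vec of_int v"
  shows "last_row_unit d (g_conj b)"
  unfolding last_row_unit_def
proof (intro allI impI)
  fix j assume j: "j < d"
  let ?X = "b * map_mat of_int g"
  have X: "?X \<in> carrier_mat d d"
    using b of_int_g_carrier by simp
  have "g_conj b $$ (d-1, j) = (map_mat of_int (adj_mat g) * ?X) $$ (d-1, j)"
    unfolding g_conj_def using b of_int_g_carrier of_int_adj_g_carrier
    by (simp add: assoc_mult_mat[of _ d d _ d _ d])
  also have "\<dots> = (\<Sum>l\<in>{0..<d}. of_int (adj_mat g $$ (d-1, l)) * ?X $$ (l, j))"
    using b g_carrier j d adj_g_carrier by (simp add: scalar_prod_def)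
  also have "\<dots> = (\<Sum>l\<in>{0..<d}. ?X $$ (l, j) * of_int (v $ l))"
    using adj_g_last_row by (intro sum.cong) (auto simp: mult.commute)
  also have "\<dots> = (transpose_mat ?X *\<^sub>v map_vec of_int v) $ j"
    using b g_carrier j v_carrier by (simp add: scalar_prod_def)
  also have "transpose_mat ?X *\<^sub>v map_vec of_int v
      = transpose_mat (map_mat of_int g) *\<^sub>v (transpose_mat b *\<^sub>v map_vec of_int v)"
    using b of_int_g_carrier v_carrier
    by (simp add: transpose_mult[of b d d _ d] assoc_mult_mat_vec[of _ d d _ d])
  also have "\<dots> = map_vec of_int (transpose_mat g *\<^sub>v v)"
    unfolding bv using g_carrier v_carrier
    by (simp add: of_int_hom.mult_mat_vec_hom[of _ d d] map_mat_transpose)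
  finally show "g_conj b $$ (d-1, j) = (if j = d-1 then 1 else 0)"
    using j d by (simp add: transpose_g_mult_v)
qed

lemma g_conj_H_pts:
  fixes b :: "'a::field_char_0 mat"
  assumes R: "is_subring R" and b: "b \<in> H_pts d v R"
  shows "g_conj b \<in> ASL_pts d R"
proof -
  note B = SO_ptsD[OF H_ptsD(1)[OF b]]
  have "transpose_mat b *\<^sub>v map_vec of_int v = map_vec of_int v"
    using orthogonal_transpose_fixes[OF B(1) B(4) _ H_ptsD(2)[OF b]] v_carrier by simp
  then show ?thesis
    unfolding ASL_pts_iff[OF d_ge_1]
    using B last_row_unit_g_conj g_conj_carrier entries_in_g_conj[OF R] det_g_conj[OF B(1)] by auto
qed

end

lemma K_grpD:
  assumes X: "X \<in> K_grp d" and d: "d \<ge> 1"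
  shows "X \<in> SO_pts d UNIV"
    and "i < d \<Longrightarrow> X $$ (i, d-1) = (if i = d-1 then 1 else 0)"
    and "j < d \<Longrightarrow> X $$ (d-1, j) = (if j = d-1 then 1 else 0)"
proof -
  show S: "X \<in> SO_pts d UNIV"
    using X unfolding K_grp_def by simp
  note XD = SO_ptsD[OF S]
  have Xe: "X *\<^sub>v unit_vec d (d-1) = unit_vec d (d-1)"
    using X unfolding K_grp_def by simp
  have XTe: "transpose_mat X *\<^sub>v unit_vec d (d-1) = unit_vec d (d-1)"
    using orthogonal_transpose_fixes[OF XD(1) XD(4) _ Xe] by simp
  show "i < d \<Longrightarrow> X $$ (i, d-1) = (if i = d-1 then 1 else 0)"
    using arg_cong[OF Xe, of "\<lambda>x. x $ i"] XD(1) d by simp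
  show "j < d \<Longrightarrow> X $$ (d-1, j) = (if j = d-1 then 1 else 0)"
    using arg_cong[OF XTe, of "\<lambda>x. x $ j"] XD(1) d by simp
qed

lemma K_grp_ASL_pts: "X \<in> K_grp d \<Longrightarrow> d \<ge> 1 \<Longrightarrow> X \<in> ASL_pts d UNIV"
  using K_grpD[of X d] SO_ptsD[of X d UNIV]
  by (simp add: ASL_pts_iff entries_in_UNIV last_row_unit_def)

lemma K_grp_transpose_mult:
  assumes X: "X \<in> K_grp d" and Y: "Y \<in> K_grp d"
  shows "transpose_mat Y * X \<in> K_grp d"
proof -
  have S: "X \<in> SO_pts d UNIV" "Y \<in> SO_pts d UNIV"
    and e: "X *\<^sub>v unit_vec d (d-1) = unit_vec d (d-1)" "Y *\<^sub>v unit_vec d (d-1) = unit_vec d (d-1)"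
    using X Y unfolding K_grp_def by auto
  note XD = SO_ptsD[OF S(1)] and YD = SO_ptsD[OF S(2)]
  have "(transpose_mat Y * X) *\<^sub>v unit_vec d (d-1) = transpose_mat Y *\<^sub>v (X *\<^sub>v unit_vec d (d-1))"
    using XD(1) YD(1) by (simp add: assoc_mult_mat_vec[of _ d d _ d])
  also have "\<dots> = unit_vec d (d-1)"
    using e orthogonal_transpose_fixes[OF YD(1) YD(4) _ e(2)] by simp
  finally show ?thesis
    using SO_pts_mult[OF is_subring_UNIV SO_pts_transpose[OF S(2)] S(1)] unfolding K_grp_def by simp
qed

lemma a_v_carrier: "a_v d v \<in> carrier_mat d d"
  unfolding a_v_def by simp

lemma a_v_commute_K_grp:
  assumes X: "X \<in> K_grp d" and d: "d \<ge> 1"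
  shows "X * a_v d v = a_v d v * X"
proof -
  have Xc: "X \<in> carrier_mat d d"
    using SO_ptsD(1)[OF K_grpD(1)[OF X d]] .
  define f where "f = (\<lambda>i. if i = d-1 then vnorm d v else vnorm d v powr (- 1 / real (d-1)))"
  have a: "a_v d v = mat d d (\<lambda>(i,j). if i = j then f i else 0)"
    unfolding a_v_def f_def by (intro eq_matI) auto
  show ?thesis
  proof (rule eq_matI)
    fix i j assume "i < dim_row (a_v d v * X)" "j < dim_col (a_v d v * X)"
    then have ij: "i < d" "j < d"
      using Xc by (auto simp: a_v_def)
    have "(X * a_v d v) $$ (i,j) = (\<Sum>l\<in>{0..<d}. X $$ (i,l) * (if l = j then f l else 0))"
      using ij Xc by (simp add: a scalar_prod_def)
    also have "\<dots> = (\<Sum>l\<in>{0..<d}. if l = j then X $$ (i,j) * f j else 0)"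
      by (intro sum.cong) auto
    finally have right: "(X * a_v d v) $$ (i,j) = X $$ (i,j) * f j"
      using ij by simp
    have "(a_v d v * X) $$ (i,j) = (\<Sum>l\<in>{0..<d}. (if i = l then f i else 0) * X $$ (l,j))"
      using ij Xc by (simp add: a scalar_prod_def)
    also have "\<dots> = (\<Sum>l\<in>{0..<d}. if l = i then f i * X $$ (i,j) else 0)"
      by (intro sum.cong) auto
    finally have left: "(a_v d v * X) $$ (i,j) = f i * X $$ (i,j)"
      using ij by simp
    have "f i = f j \<or> X $$ (i,j) = 0"
      using K_grpD(2)[OF X d, of i] K_grpD(3)[OF X d, of j] ij unfolding f_def by auto
    then show "(X * a_v d v) $$ (i,j) = (a_v d v * X) $$ (i,j)"
      using left right by auto
  qed (use Xc in \<open>auto simp: a_v_def\<close>)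
qed

lemma a_v_mult_K_grp_mult:
  assumes X: "X \<in> K_grp d" and Y: "Y \<in> carrier_mat d d" and d: "d \<ge> 1"
  shows "a_v d v * (X * Y) = X * (a_v d v * Y)"
proof -
  have Xc: "X \<in> carrier_mat d d"
    using SO_ptsD(1)[OF K_grpD(1)[OF X d]] .
  have "a_v d v * (X * Y) = (a_v d v * X) * Y"
    using Xc Y a_v_carrier[of d v] by (simp add: assoc_mult_mat[of _ d d _ d _ d])
  also have "\<dots> = (X * a_v d v) * Y"
    using a_v_commute_K_grp[OF X d] by simp
  also have "\<dots> = X * (a_v d v * Y)"
    using Xc Y a_v_carrier[of d v] by (simp add: assoc_mult_mat[of _ d d _ d _ d])
  finally show ?thesis .
qed

lemma det_a_v:
  assumes d: "d \<ge> 2" and nv: "vnorm d v > 0"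
  shows "det (a_v d v) = 1"
proof -
  define c where "c = vnorm d v powr (- 1 / real (d-1))"
  have "upper_triangular (a_v d v)"
    unfolding upper_triangular_def a_v_def by auto
  then have "det (a_v d v) = (\<Prod>i = 0..<d. a_v d v $$ (i,i))"
    using det_upper_triangular[OF _ a_v_carrier] by (simp add: prod_list_diag_prod a_v_def)
  also have "\<dots> = (\<Prod>i \<in> {0..<d-1} \<union> {d-1}. if i = d-1 then vnorm d v else c)"
    unfolding a_v_def c_def using d by (intro prod.cong) auto
  also have "\<dots> = c ^ (d-1) * vnorm d v"
    by (subst prod.union_disjoint) auto
  also have "c ^ (d-1) = vnorm d v powr (- 1 / real (d-1) * real (d-1))"
    unfolding c_def using nv by (simp add: powr_realpow[symmetric] powr_powr)
  also have "- 1 / real (d-1) * real (d-1) = -1"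
    using d by simp
  finally show ?thesis
    using nv by (simp add: powr_neg_one)
qed

lemma a_v_mult_last_row:
  assumes "X \<in> carrier_mat d n" "j < n" "d \<ge> 1"
  shows "(a_v d v * X) $$ (d-1, j) = vnorm d v * X $$ (d-1, j)"
proof -
  have "(a_v d v * X) $$ (d-1, j) = (\<Sum>l\<in>{0..<d}. a_v d v $$ (d-1, l) * X $$ (l, j))"
    using assms by (simp add: scalar_prod_def a_v_def)
  also have "\<dots> = (\<Sum>l\<in>{0..<d}. if l = d-1 then vnorm d v * X $$ (d-1, j) else 0)"
    using assms(3) by (intro sum.cong) (auto simp: a_v_def)
  finally show ?thesis
    using assms(3) by simp
qed

locale kv_frame = gv_basis +
  fixes k :: "real mat"
  assumes is_kv: "is_kv d v k"
begin

lemma vnorm_pos: "vnorm d v > 0"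
proof -
  obtain i where "i < d" "v $ i \<noteq> 0"
    using primitive_v by (rule primitive_nonzero)
  then have "(\<Sum>j<d. (real_of_int (v $ j))\<^sup>2) > 0"
    by (intro sum_pos2[of _ i]) auto
  then show ?thesis
    unfolding vnorm_def by simp
qed

lemma k_SO: "k \<in> SO_pts d UNIV"
  using is_kv unfolding is_kv_def by simp

lemma k_carrier: "k \<in> carrier_mat d d"
  using SO_ptsD(1)[OF k_SO] .

lemma k_mult_v: "k *\<^sub>v map_vec of_int v = vnorm d v \<cdot>\<^sub>v unit_vec d (d-1)"
  using is_kv unfolding is_kv_def by simp

lemma transpose_k_unit_vec: "transpose_mat k *\<^sub>v unit_vec d (d-1) = (1 / vnorm d v) \<cdot>\<^sub>v map_vec of_int v"
proof -
  note K = SO_ptsD[OF k_SO]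
  have "map_vec of_int v = transpose_mat k *\<^sub>v (k *\<^sub>v map_vec of_int v)"
    using K(1,4) v_carrier by (simp add: assoc_mult_mat_vec[symmetric, of _ d d k d])
  also have "\<dots> = vnorm d v \<cdot>\<^sub>v (transpose_mat k *\<^sub>v unit_vec d (d-1))"
    unfolding k_mult_v using K(1) by (intro mult_mat_vec[of _ d d]) auto
  finally show ?thesis
    using vnorm_pos by (simp add: smult_smult_assoc)
qed

lemma k_H_pts_conj:
  assumes h: "h \<in> H_pts d v UNIV"
  shows "k * h * transpose_mat k \<in> K_grp d"
proof -
  note K = SO_ptsD[OF k_SO] and hc = H_pts_carrier[OF h]
  have "(k * h * transpose_mat k) *\<^sub>v unit_vec d (d-1)
      = (1 / vnorm d v) \<cdot>\<^sub>v (k *\<^sub>v (h *\<^sub>v map_vec of_int v))"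
    using K(1) hc v_carrier transpose_k_unit_vec
    by (simp add: assoc_mult_mat_vec[of _ d d _ d] mult_mat_vec[of _ d d])
  also have "\<dots> = unit_vec d (d-1)"
    using H_ptsD(2)[OF h] k_mult_v vnorm_pos by (simp add: smult_smult_assoc)
  finally show ?thesis
    using SO_pts_mult[OF is_subring_UNIV SO_pts_mult[OF is_subring_UNIV k_SO H_ptsD(1)[OF h]]
        SO_pts_transpose[OF k_SO]]
    unfolding K_grp_def by simp
qed

lemma transpose_k_K_grp_conj:
  assumes X: "X \<in> K_grp d"
  shows "transpose_mat k * X * k \<in> H_pts d v UNIV"
proof -
  note K = SO_ptsD[OF k_SO] and XS = K_grpD(1)[OF X d_ge_1]
  have Xe: "X *\<^sub>v unit_vec d (d-1) = unit_vec d (d-1)"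
    using X unfolding K_grp_def by simp
  have "(transpose_mat k * X * k) *\<^sub>v map_vec of_int v
      = vnorm d v \<cdot>\<^sub>v (transpose_mat k *\<^sub>v (X *\<^sub>v unit_vec d (d-1)))"
    using K(1) SO_ptsD(1)[OF XS] v_carrier k_mult_v
    by (simp add: assoc_mult_mat_vec[of _ d d _ d] mult_mat_vec[of _ d d])
  also have "\<dots> = map_vec of_int v"
    unfolding Xe transpose_k_unit_vec using vnorm_pos by (simp add: smult_smult_assoc)
  finally show ?thesis
    using SO_pts_mult[OF is_subring_UNIV SO_pts_mult[OF is_subring_UNIV SO_pts_transpose[OF k_SO] XS] k_SO]
    unfolding H_pts_def by simp
qed

lemma a_v_k_g_ASL_pts: "a_v d v * k * map_mat of_int g \<in> ASL_pts d UNIV"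
proof -
  let ?G = "map_mat of_int g :: real mat"
  have kG: "k * ?G \<in> carrier_mat d d"
    using k_carrier of_int_g_carrier by simp
  have last_row: "last_row_unit d (a_v d v * k * ?G)"
    unfolding last_row_unit_def
  proof (intro allI impI)
    fix j assume j: "j < d"
    have "(a_v d v * k * ?G) $$ (d-1, j) = vnorm d v * (k * ?G) $$ (d-1, j)"
      using k_carrier of_int_g_carrier a_v_carrier a_v_mult_last_row[OF kG j d_ge_1]
      by (simp add: assoc_mult_mat[of _ d d _ d _ d])
    also have "(k * ?G) $$ (d-1, j) = (transpose_mat (k * ?G) *\<^sub>v unit_vec d (d-1)) $ j"
      using k_carrier g_carrier j d by simp
    also have "transpose_mat (k * ?G) *\<^sub>v unit_vec d (d-1) = (1 / vnorm d v) \<cdot>\<^sub>v map_vec of_int (transpose_mat g *\<^sub>v v)"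
      using k_carrier g_carrier v_carrier transpose_k_unit_vec
      by (simp add: transpose_mult[of k d d] assoc_mult_mat_vec[of _ d d _ d]
          mult_mat_vec[of _ d d] of_int_hom.mult_mat_vec_hom[of _ d d] map_mat_transpose)
    finally show "(a_v d v * k * ?G) $$ (d-1, j) = (if j = d-1 then 1 else 0)"
      using j d vnorm_pos by (simp add: transpose_g_mult_v)
  qed
  have "det (a_v d v * k * ?G) = det (a_v d v) * det k * det ?G"
    using det_mult[OF a_v_carrier k_carrier] det_mult[OF mult_carrier_mat[OF a_v_carrier k_carrier] of_int_g_carrier]
    by simp
  also have "\<dots> = 1"
    using det_a_v[OF d vnorm_pos] SO_ptsD(5)[OF k_SO] det_g by simp
  finally show ?thesis
    using last_row mult_carrier_mat[OF mult_carrier_mat[OF a_v_carrier k_carrier] of_int_g_carrier]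
    by (simp add: ASL_pts_iff[OF d_ge_1] entries_in_UNIV)
qed

end

fun pt_carrier :: "nat \<Rightarrow> 'k::field_char_0 pt \<Rightarrow> bool" where
  "pt_carrier d ((a, b), (c, e)) \<longleftrightarrow>
     a \<in> carrier_mat d d \<and> b \<in> carrier_mat d d \<and> c \<in> carrier_mat d d \<and> e \<in> carrier_mat d d"

lemma pt_carrier_ptmul: "pt_carrier d x \<Longrightarrow> pt_carrier d y \<Longrightarrow> pt_carrier d (ptmul x y)"
  by (cases x, cases y) auto

lemma ptmul_assoc:
  "pt_carrier d x \<Longrightarrow> pt_carrier d y \<Longrightarrow> pt_carrier d z \<Longrightarrow>
    ptmul (ptmul x y) z = ptmul x (ptmul y z)"
  by (cases x, cases y, cases z) (auto simp: assoc_mult_mat[of _ d d _ d _ d])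

lemma Gamma_carrier: "(a, b) \<in> Gamma p d \<Longrightarrow> a \<in> carrier_mat d d \<and> b \<in> carrier_mat d d"
  unfolding Gamma_def SO_pts_def ASL_pts_def by auto

lemma ptmul_diag_emb_one:
  assumes "pt_carrier d x"
  shows "ptmul x (diag_emb (1\<^sub>m d, 1\<^sub>m d)) = x"
proof -
  obtain a b c e where "x = ((a, b), (c, e))"
    by (metis prod.collapse)
  then show ?thesis
    using assms by (simp add: of_rat_hom.mat_hom_one right_mult_one_mat[of _ d d])
qed

lemma Gamma_mult:
  "d \<ge> 1 \<Longrightarrow> (a1, a2) \<in> Gamma p d \<Longrightarrow> (b1, b2) \<in> Gamma p d \<Longrightarrow> (a1 * b1, a2 * b2) \<in> Gamma p d"
  using SO_pts_mult[OF is_subring_Zinvp] ASL_pts_mult[OF is_subring_Zinvp] unfolding Gamma_def by auto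

lemma Gamma_one: "d \<ge> 1 \<Longrightarrow> (1\<^sub>m d, 1\<^sub>m d) \<in> Gamma p d"
  unfolding Gamma_def using SO_pts_one[OF is_subring_Zinvp] ASL_pts_one[OF is_subring_Zinvp] by auto

lemma Gamma_inverse:
  assumes "d \<ge> 1" "(a1, a2) \<in> Gamma p d"
  shows "(transpose_mat a1, adj_mat a2) \<in> Gamma p d"
    and "a1 * transpose_mat a1 = 1\<^sub>m d" "a2 * adj_mat a2 = 1\<^sub>m d"
proof -
  have "a1 \<in> SO_pts d (Zinvp p)" "a2 \<in> ASL_pts d (Zinvp p)"
    using assms(2) unfolding Gamma_def by auto
  then show "(transpose_mat a1, adj_mat a2) \<in> Gamma p d"
    and "a1 * transpose_mat a1 = 1\<^sub>m d" "a2 * adj_mat a2 = 1\<^sub>m d"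
    using SO_pts_transpose SO_ptsD(3) ASL_pts_adj_mat[OF is_subring_Zinvp _ assms(1)]
    unfolding Gamma_def by blast+
qed

lemma diag_emb_mult:
  assumes "(a1, a2) \<in> Gamma p d" "(b1, b2) \<in> Gamma p d"
  shows "ptmul (diag_emb (a1, a2)) (diag_emb (b1, b2)) = (diag_emb (a1 * b1, a2 * b2) :: 'k::field_char_0 pt)"
  using Gamma_carrier[OF assms(1)] Gamma_carrier[OF assms(2)]
  by (simp add: of_rat_hom.mat_hom_mult[of _ d d _ d])

lemma ptmul_diag_emb_mult:
  assumes "pt_carrier d x" "(a1, a2) \<in> Gamma p d" "(b1, b2) \<in> Gamma p d"
  shows "ptmul (ptmul x (diag_emb (a1, a2))) (diag_emb (b1, b2)) = ptmul x (diag_emb (a1 * b1, a2 * b2))"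
proof -
  have "ptmul (ptmul x (diag_emb (a1, a2))) (diag_emb (b1, b2))
      = ptmul x (ptmul (diag_emb (a1, a2)) (diag_emb (b1, b2)))"
    using assms(1) Gamma_carrier[OF assms(2)] Gamma_carrier[OF assms(3)]
    by (intro ptmul_assoc) auto
  then show ?thesis
    unfolding diag_emb_mult[OF assms(2,3)] .
qed

lemma coset_ptmul_Gamma:
  assumes d: "d \<ge> 1" and x: "pt_carrier d x" and \<gamma>: "\<gamma> \<in> Gamma p d"
  shows "coset p d (ptmul x (diag_emb \<gamma>)) = coset p d x"
proof -
  obtain a1 a2 where \<gamma>a: "\<gamma> = (a1, a2)"
    by (cases \<gamma>)
  have a: "(a1, a2) \<in> Gamma p d"
    using \<gamma> \<gamma>a by simp
  note inv = Gamma_inverse[OF d a]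
  show ?thesis
  proof
    show "coset p d (ptmul x (diag_emb \<gamma>)) \<subseteq> coset p d x"
    proof
      fix z assume "z \<in> coset p d (ptmul x (diag_emb \<gamma>))"
      then obtain b1 b2 where b: "(b1, b2) \<in> Gamma p d" and z: "z = ptmul (ptmul x (diag_emb \<gamma>)) (diag_emb (b1, b2))"
        unfolding coset_def by auto
      then have "z = ptmul x (diag_emb (a1 * b1, a2 * b2))"
        using ptmul_diag_emb_mult[OF x a b] \<gamma>a by simp
      then show "z \<in> coset p d x"
        unfolding coset_def using Gamma_mult[OF d a b] by blast
    qed
    show "coset p d x \<subseteq> coset p d (ptmul x (diag_emb \<gamma>))"
    proof
      fix z assume "z \<in> coset p d x"
      then obtain b1 b2 where b: "(b1, b2) \<in> Gamma p d" and z: "z = ptmul x (diag_emb (b1, b2))"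
        unfolding coset_def by auto
      have "a1 * (transpose_mat a1 * b1) = b1" "a2 * (adj_mat a2 * b2) = b2"
        using inv Gamma_carrier[OF a] Gamma_carrier[OF inv(1)] Gamma_carrier[OF b]
        by (auto simp: mult_right_inverse_cancel)
      then have "z = ptmul (ptmul x (diag_emb \<gamma>)) (diag_emb (transpose_mat a1 * b1, adj_mat a2 * b2))"
        using z ptmul_diag_emb_mult[OF x a Gamma_mult[OF d inv(1) b]] \<gamma>a by simp
      then show "z \<in> coset p d (ptmul x (diag_emb \<gamma>))"
        unfolding coset_def using Gamma_mult[OF d inv(1) b] by blast
    qed
  qed
qed

lemma coset_eqD:
  assumes "coset p d x = coset p d y" "d \<ge> 1" "pt_carrier d x"
  obtains \<gamma> where "\<gamma> \<in> Gamma p d" "x = ptmul y (diag_emb \<gamma>)"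
proof -
  have "x \<in> coset p d x"
    using ptmul_diag_emb_one[OF assms(3)] Gamma_one[OF assms(2)] unfolding coset_def by force
  then show ?thesis
    using assms(1) that unfolding coset_def by blast
qed

section \<open>Splitting \<open>SL\<^sub>d(\<int>\<^sub>p) SL\<^sub>d(\<int>[1/p]) \<inter> ASL\<^sub>d\<^sub>-\<^sub>1\<close>\<close>

lemma last_row_mult_cong:
  assumes "X \<in> carrier_mat d d" "X' \<in> carrier_mat d d" "Z \<in> carrier_mat d n"
    and "\<And>l. l < d \<Longrightarrow> X $$ (d-1, l) = X' $$ (d-1, l)" and "j < n" "d \<ge> 1"
  shows "(X * Z) $$ (d-1, j) = (X' * Z) $$ (d-1, j)"
proof -
  have "(X * Z) $$ (d-1, j) = (\<Sum>l\<in>{0..<d}. X $$ (d-1, l) * Z $$ (l, j))"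
    using assms by (simp add: scalar_prod_def)
  also have "\<dots> = (\<Sum>l\<in>{0..<d}. X' $$ (d-1, l) * Z $$ (l, j))"
    using assms(4) by (intro sum.cong) auto
  also have "\<dots> = (X' * Z) $$ (d-1, j)"
    using assms by (simp add: scalar_prod_def)
  finally show ?thesis .
qed

lemma common_divisor_last_row_unit:
  fixes X Xi :: "'a::comm_ring_1 mat"
  assumes R: "is_subring R" and X: "X \<in> carrier_mat d d" "Xi \<in> carrier_mat d d" "X * Xi = 1\<^sub>m d"
    and Xi: "entries_in d R Xi" and d: "d \<ge> 1"
    and r: "\<And>j. j < d \<Longrightarrow> X $$ (d-1, j) = of_int (r j)" and n: "\<And>j. j < d \<Longrightarrow> n dvd r j"
  shows "\<exists>s\<in>R. of_int n * s = 1"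
proof -
  let ?s = "\<Sum>l\<in>{0..<d}. of_int (r l div n) * Xi $$ (l, d-1)"
  have "1 = (X * Xi) $$ (d-1, d-1)"
    using X(3) d by simp
  also have "\<dots> = (\<Sum>l\<in>{0..<d}. of_int (r l) * Xi $$ (l, d-1))"
    using X(1,2) d r by (simp add: scalar_prod_def)
  also have "\<dots> = (\<Sum>l\<in>{0..<d}. of_int n * (of_int (r l div n) * Xi $$ (l, d-1)))"
    using n by (intro sum.cong) (auto simp: mult.assoc[symmetric] of_int_mult[symmetric])
  also have "\<dots> = of_int n * ?s"
    by (simp add: sum_distrib_left)
  finally have "of_int n * ?s = 1" ..
  moreover have "?s \<in> R"
    using Xi d unfolding entries_in_def by (intro is_subring_sum[OF R] is_subringD(5)[OF R]) (auto simp: is_subringD[OF R])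
  ultimately show ?thesis
    by blast
qed

lemma of_int_mult_adj_mat:
  assumes "C \<in> carrier_mat d d" "det C = 1"
  shows "map_mat of_int C * map_mat of_int (adj_mat C) = (1\<^sub>m d :: 'a::comm_ring_1 mat)"
    and "map_mat of_int (adj_mat C) * map_mat of_int C = (1\<^sub>m d :: 'a::comm_ring_1 mat)"
  using assms adj_mat(1)[OF assms(1)] adj_mat_inverse[OF assms]
  by (simp_all add: of_int_hom.mat_hom_mult[symmetric] of_int_hom.mat_hom_one)

lemma ASL_pts_mult_of_int_adj:
  fixes A :: "'a::comm_ring_1 mat" and C :: "int mat"
  assumes R: "is_subring R" and d: "d \<ge> 1"
    and A: "A \<in> carrier_mat d d" "det A = 1" "entries_in d R A"
    and C: "C \<in> carrier_mat d d" "det C = 1"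
    and row: "\<And>j. j < d \<Longrightarrow> A $$ (d-1, j) = of_int (C $$ (d-1, j))"
  shows "A * map_mat of_int (adj_mat C) \<in> ASL_pts d R"
proof -
  note Ci = adj_mat(1)[OF C(1)] adj_mat_inverse(3)[OF C]
  have "last_row_unit d (A * map_mat of_int (adj_mat C))"
    unfolding last_row_unit_def
  proof (intro allI impI)
    fix j assume j: "j < d"
    have "(A * map_mat of_int (adj_mat C)) $$ (d-1, j) = (map_mat of_int C * map_mat of_int (adj_mat C)) $$ (d-1, j)"
      using C(1) Ci(1) A(1) row j d by (intro last_row_mult_cong) auto
    then show "(A * map_mat of_int (adj_mat C)) $$ (d-1, j) = (if j = d-1 then 1 else 0)"
      using of_int_mult_adj_mat(1)[OF C, where 'a = 'a] j by simp
  qed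
  then show ?thesis
    unfolding ASL_pts_iff[OF d] using A Ci det_mult[OF A(1), of "map_mat of_int (adj_mat C)"]
    by (simp add: entries_in_mult[OF R] entries_in_of_int[OF R])
qed

lemma ASL_pts_of_int_mult:
  fixes B :: "'a::comm_ring_1 mat" and C :: "int mat"
  assumes R: "is_subring R" and d: "d \<ge> 1"
    and B: "B \<in> carrier_mat d d" "det B = 1" "entries_in d R B"
    and C: "C \<in> carrier_mat d d" "det C = 1"
    and row: "\<And>j. j < d \<Longrightarrow> adj_mat B $$ (d-1, j) = of_int (C $$ (d-1, j))"
  shows "map_mat of_int C * B \<in> ASL_pts d R"
proof -
  have "last_row_unit d (map_mat of_int C * B)"
    unfolding last_row_unit_def
  proof (intro allI impI)
    fix j assume j: "j < d"
    have "(map_mat of_int C * B) $$ (d-1, j) = (adj_mat B * B) $$ (d-1, j)"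
      using C(1) adj_mat(1)[OF B(1)] B(1) row j d by (intro last_row_mult_cong) auto
    then show "(map_mat of_int C * B) $$ (d-1, j) = (if j = d-1 then 1 else 0)"
      using adj_mat_inverse(2)[OF B(1,2)] j by simp
  qed
  then show ?thesis
    unfolding ASL_pts_iff[OF d] using B C det_mult[OF _ B(1), of "map_mat of_int C"]
    by (simp add: entries_in_mult[OF R] entries_in_of_int[OF R])
qed

context Qp_absv
begin

lemma primitive_row_if_common_last_row:
  fixes A :: "'k mat" and B :: "rat mat"
  assumes d: "d \<ge> 1"
    and A: "A \<in> carrier_mat d d" "det A = 1" "entries_in d (Zp absv) A"
    and B: "B \<in> carrier_mat d d" "det B = 1" "entries_in d (Zinvp p) B"
    and rA: "\<And>j. j < d \<Longrightarrow> A $$ (d-1, j) = of_int (r j)"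
    and rB: "\<And>j. j < d \<Longrightarrow> adj_mat B $$ (d-1, j) = of_int (r j)"
  shows "primitive_row d r"
  unfolding primitive_row_def
proof (intro allI impI)
  fix n assume n: "\<forall>i<d. n dvd r i"
  obtain s where s: "s \<in> Zp absv" "of_int n * s = 1"
    using common_divisor_last_row_unit[OF is_subring_Zp A(1) adj_mat(1)[OF A(1)] adj_mat_inverse(1)[OF A(1,2)]
        entries_in_adj_mat[OF is_subring_Zp A(1,3)] d rA] n by blast
  obtain q where q: "q \<in> Zinvp p" "of_int n * q = 1"
    using common_divisor_last_row_unit[OF is_subring_Zinvp adj_mat(1)[OF B(1)] B(1) adj_mat_inverse(2)[OF B(1,2)]
        B(3) d rB] n by blast
  have "(of_rat q :: 'k) = s"
    using s(2) q(2) by (metis mult.commute mult.left_neutral mult.assoc of_rat_1 of_rat_mult of_rat_of_int_eq)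
  then have "q \<in> \<int>"
    using Ints_if_Zinvp_Zp[OF q(1)] s(1) unfolding Zp_def by simp
  then obtain m where "q = of_int m"
    by (auto elim: Ints_cases)
  then have "n * m = 1"
    using q(2) by (metis of_int_1 of_int_eq_iff of_int_mult)
  then show "n = 1 \<or> n = -1"
    using zmult_eq_1_iff by blast
qed

lemma common_last_row_Ints:
  fixes A :: "'k mat" and B :: "rat mat"
  assumes d: "d \<ge> 1"
    and A: "A \<in> carrier_mat d d" "entries_in d (Zp absv) A"
    and B: "B \<in> carrier_mat d d" "det B = 1" "entries_in d (Zinvp p) B"
    and AB: "last_row_unit d (A * map_mat of_rat B)"
  obtains r where "\<And>j. j < d \<Longrightarrow> A $$ (d-1, j) = of_int (r j)"
    and "\<And>j. j < d \<Longrightarrow> adj_mat B $$ (d-1, j) = of_int (r j)"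
proof -
  define Bi where "Bi = adj_mat B"
  note Bi = adj_mat(1)[OF B(1), folded Bi_def] adj_mat_inverse[OF B(1,2), folded Bi_def]
  have "map_mat of_rat B * map_mat of_rat Bi = (map_mat of_rat (B * Bi) :: 'k mat)"
    using B(1) Bi(1) by (simp add: of_rat_hom.mat_hom_mult)
  then have "map_mat of_rat B * map_mat of_rat Bi = (1\<^sub>m d :: 'k mat)"
    using Bi(2) by (simp add: of_rat_hom.mat_hom_one)
  then have A_eq: "A = (A * map_mat of_rat B) * map_mat of_rat Bi"
    using A(1) B(1) Bi by (simp add: assoc_mult_mat[of _ d d _ d _ d])
  have A_row: "A $$ (d-1, j) = of_rat (Bi $$ (d-1, j))" if j: "j < d" for j
    using last_row_unit_mult_left[OF _ AB _ j d, of "map_mat of_rat Bi"] A(1) B(1) Bi(1) j d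
    by (subst A_eq) simp
  define r where "r j = \<lfloor>Bi $$ (d-1, j)\<rfloor>" for j
  have Bi_row: "Bi $$ (d-1, j) = of_int (r j)" if j: "j < d" for j
  proof -
    have dd: "d - 1 < d"
      using d by simp
    have "Bi $$ (d-1, j) \<in> Zinvp p"
      using entries_in_adj_mat[OF is_subring_Zinvp B(1,3)] j dd unfolding Bi_def entries_in_def by blast
    moreover have "absv (A $$ (d-1, j)) \<le> 1"
      using A(2) j dd unfolding entries_in_def Zp_def by blast
    then have "absv (of_rat (Bi $$ (d-1, j)) :: 'k) \<le> 1"
      using A_row[OF j] by simp
    ultimately have "Bi $$ (d-1, j) \<in> \<int>"
      by (rule Ints_if_Zinvp_Zp)
    then show ?thesis
      unfolding r_def by (auto elim: Ints_cases)
  qed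
  show ?thesis
    using that[of r] A_row Bi_row unfolding Bi_def by simp
qed

text \<open>The common last row of \<open>A\<close> and \<open>B\<^sup>-\<^sup>1\<close> is integral and primitive, so it is the last row
  of some \<open>C \<in> SL\<^sub>d(\<int>)\<close>; then \<open>A C\<^sup>-\<^sup>1\<close> and \<open>C B\<close> have last row \<open>e\<^sub>d\<close>.\<close>

lemma ASL_split:
  fixes A :: "'k mat" and B :: "rat mat"
  assumes d: "d \<ge> 2"
    and A: "A \<in> carrier_mat d d" "det A = 1" "entries_in d (Zp absv) A"
    and B: "B \<in> carrier_mat d d" "det B = 1" "entries_in d (Zinvp p) B"
    and AB: "last_row_unit d (A * map_mat of_rat B)"
  obtains A' B' where "A' \<in> ASL_pts d (Zp absv)" "B' \<in> ASL_pts d (Zinvp p)"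
    "A * map_mat of_rat B = A' * map_mat of_rat B'"
proof -
  have d1: "d \<ge> 1"
    using d by simp
  obtain r where rA: "\<And>j. j < d \<Longrightarrow> A $$ (d-1, j) = of_int (r j)"
    and rB: "\<And>j. j < d \<Longrightarrow> adj_mat B $$ (d-1, j) = of_int (r j)"
    using common_last_row_Ints[OF d1 A(1,3) B AB] by blast
  then have "primitive_row d r"
    by (rule primitive_row_if_common_last_row[OF d1 A B])
  then obtain C :: "int mat" where C: "C \<in> carrier_mat d d" "det C = 1"
    and rC: "\<And>j. j < d \<Longrightarrow> C $$ (d-1, j) = r j"
    using SL_last_row_if_primitive[OF d] unfolding SL_last_row_def by blast
  have A': "A * map_mat of_int (adj_mat C) \<in> ASL_pts d (Zp absv)"
    using rA rC by (intro ASL_pts_mult_of_int_adj[OF is_subring_Zp d1 A C]) simp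
  have B': "map_mat of_int C * B \<in> ASL_pts d (Zinvp p)"
    using rB rC by (intro ASL_pts_of_int_mult[OF is_subring_Zinvp d1 B C]) simp
  have "A * map_mat of_int (adj_mat C) * map_mat of_rat (map_mat of_int C * B)
      = A * (map_mat of_int (adj_mat C) * (map_mat of_int C * map_mat of_rat B))"
    using A(1) B(1) C(1) adj_mat(1)[OF C(1)]
    by (simp add: of_rat_hom.mat_hom_mult[of _ d d _ d] assoc_mult_mat[of _ d d _ d _ d])
  also have "\<dots> = A * map_mat of_rat B"
    using B(1) C(1) adj_mat(1)[OF C(1)] of_int_mult_adj_mat(2)[OF C, where 'a = 'k]
    by (simp add: mult_right_inverse_cancel)
  finally show ?thesis
    using that A' B' by metis
qed

end

section \<open>The orbit \<open>O\<^sub>v\<^sub>,\<^sub>p\<close> and its pieces \<open>O\<^sub>v\<^sub>,\<^sub>p\<^sub>,\<^sub>h\<close>\<close>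

locale orbit_setting = kv_frame d v g k + Qp_absv p absv
  for d v g k p and absv :: "'k::field_char_0 \<Rightarrow> real" +
  fixes M :: "'k mat set"
  assumes rep: "is_rep_set p d v absv M"
begin

lemmas mat_simps = assoc_mult_mat[of _ d d _ d _ d] mult_carrier_mat[of _ d d _ d]
  left_mult_one_mat[of _ d d] right_mult_one_mat[of _ d d]

definition akg :: "real mat" where
  "akg = a_v d v * k * map_mat of_int g"

lemma akg_carrier: "akg \<in> carrier_mat d d"
  unfolding akg_def using mult_carrier_mat[OF mult_carrier_mat[OF a_v_carrier k_carrier] of_int_g_carrier] .

definition base_pt :: "'k pt" where
  "base_pt = ((k, 1\<^sub>m d), (akg, 1\<^sub>m d))"

definition L_pt :: "real mat \<Rightarrow> 'k mat \<Rightarrow> 'k pt" where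
  "L_pt h1 h2 = ((h1, h2), (g_conj h1, g_conj h2))"

definition DK_pt :: "real mat \<Rightarrow> 'k mat \<Rightarrow> 'k pt" where
  "DK_pt k' a' = ((k', a'), (k', g_conj a'))"

definition base_pt_h :: "'k mat \<Rightarrow> 'k pt" where
  "base_pt_h h = ((k, h), (akg, g_conj h))"

lemma L_RQp_eq: "L_RQp d v g = {L_pt h1 h2 | h1 h2. h1 \<in> H_pts d v UNIV \<and> h2 \<in> H_pts d v UNIV}"
proof (intro equalityI subsetI)
  fix l :: "'k pt" assume l: "l \<in> L_RQp d v g"
  obtain h1 h2 m1 m2 where l_eq: "l = ((h1, h2), (m1, m2))"
    by (metis prod.collapse)
  have h: "h1 \<in> H_pts d v UNIV" "h2 \<in> H_pts d v UNIV"
    and m: "m1 \<in> carrier_mat d d" "m2 \<in> carrier_mat d d"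
      "map_mat of_int g * m1 = h1 * map_mat of_int g" "map_mat of_int g * m2 = h2 * map_mat of_int g"
    using l unfolding l_eq L_RQp_def by simp_all
  have "m1 = g_conj h1" "m2 = g_conj h2"
    using intertwines_iff_g_conj[OF m(1) H_pts_carrier[OF h(1)]]
      intertwines_iff_g_conj[OF m(2) H_pts_carrier[OF h(2)]] m(3,4) by simp_all
  then show "l \<in> {L_pt h1 h2 | h1 h2. h1 \<in> H_pts d v UNIV \<and> h2 \<in> H_pts d v UNIV}"
    unfolding L_pt_def l_eq using h by blast
next
  fix l :: "'k pt" assume "l \<in> {L_pt h1 h2 | h1 h2. h1 \<in> H_pts d v UNIV \<and> h2 \<in> H_pts d v UNIV}"
  then obtain h1 h2 where l: "l = L_pt h1 h2" and h: "h1 \<in> H_pts d v UNIV" "h2 \<in> H_pts d v UNIV"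
    by blast
  note hc = H_pts_carrier[OF h(1)] H_pts_carrier[OF h(2)]
  show "l \<in> L_RQp d v g"
    unfolding L_RQp_def L_pt_def l
    using h hc g_conj_carrier[OF hc(1)] g_conj_carrier[OF hc(2)]
      intertwines_iff_g_conj[OF g_conj_carrier[OF hc(1)] hc(1)]
      intertwines_iff_g_conj[OF g_conj_carrier[OF hc(2)] hc(2)]
    by simp
qed

lemma DK_L_eq: "DK_L d v g absv = {DK_pt k' a' | k' a'. k' \<in> K_grp d \<and> a' \<in> H_pts d v (Zp absv)}"
proof (intro equalityI subsetI)
  fix y :: "'k pt" assume "y \<in> DK_L d v g absv"
  then obtain k' a' m' where y: "y = ((k', a'), (k', m'))" and ka: "k' \<in> K_grp d" "a' \<in> H_pts d v (Zp absv)"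
    and m: "m' \<in> carrier_mat d d" "map_mat of_int g * m' = a' * map_mat of_int g"
    unfolding DK_L_def by blast
  then have "m' = g_conj a'"
    using intertwines_iff_g_conj[OF m(1) H_pts_carrier[OF ka(2)]] by simp
  then show "y \<in> {DK_pt k' a' | k' a'. k' \<in> K_grp d \<and> a' \<in> H_pts d v (Zp absv)}"
    unfolding DK_pt_def using y ka by blast
next
  fix y :: "'k pt" assume "y \<in> {DK_pt k' a' | k' a'. k' \<in> K_grp d \<and> a' \<in> H_pts d v (Zp absv)}"
  then obtain k' a' where y: "y = DK_pt k' a'" and ka: "k' \<in> K_grp d" "a' \<in> H_pts d v (Zp absv)"
    by blast
  note ac = H_pts_carrier[OF ka(2)]
  have "map_mat of_int g * g_conj a' = a' * map_mat of_int g"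
    using intertwines_iff_g_conj[OF g_conj_carrier[OF ac] ac] by simp
  then show "y \<in> DK_L d v g absv"
    unfolding DK_L_def DK_pt_def y using ka g_conj_carrier[OF ac] by blast
qed

lemma O_vp_eq:
  "O_vp p d v g k TYPE('k) =
    {coset p d (ptmul base_pt (L_pt h1 h2)) | h1 h2. h1 \<in> H_pts d v UNIV \<and> h2 \<in> H_pts d v UNIV}"
  unfolding O_vp_def L_RQp_eq base_pt_def akg_def by blast

lemma O_vph_eq:
  assumes "h \<in> carrier_mat d d"
  shows "O_vph p d v g k absv h =
    {coset p d (ptmul (DK_pt k' a') (base_pt_h h)) | k' a'. k' \<in> K_grp d \<and> a' \<in> H_pts d v (Zp absv)}"
proof -
  have "m \<in> carrier_mat d d \<and> map_mat of_int g * m = h * map_mat of_int g \<longleftrightarrow> m = g_conj h" for m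
    using intertwines_iff_g_conj[OF _ assms] g_conj_carrier[OF assms] by blast
  then have "O_vph p d v g k absv h = {coset p d (ptmul y (base_pt_h h)) | y. y \<in> DK_L d v g absv}"
    unfolding O_vph_def base_pt_h_def akg_def by simp
  then show ?thesis
    unfolding DK_L_eq by blast
qed

lemma pt_carrier_L_pt: "h1 \<in> carrier_mat d d \<Longrightarrow> h2 \<in> carrier_mat d d \<Longrightarrow> pt_carrier d (L_pt h1 h2)"
  unfolding L_pt_def by (simp add: g_conj_carrier)

lemma pt_carrier_base_pt: "pt_carrier d base_pt"
  unfolding base_pt_def using k_carrier akg_carrier by simp

lemma pt_carrier_DK_base_pt_h:
  "k' \<in> carrier_mat d d \<Longrightarrow> a' \<in> carrier_mat d d \<Longrightarrow> h \<in> carrier_mat d d \<Longrightarrow>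
    pt_carrier d (ptmul (DK_pt k' a') (base_pt_h h))"
  unfolding DK_pt_def base_pt_h_def using k_carrier akg_carrier by (simp add: g_conj_carrier mat_simps)

lemma akg_mult_g_conj:
  "X \<in> carrier_mat d d \<Longrightarrow> akg * g_conj X = a_v d v * (k * (X * map_mat of_int g))"
  unfolding akg_def g_conj_def using a_v_carrier k_carrier of_int_g_carrier of_int_adj_g_carrier
  by (simp add: mat_simps of_int_g_adj_g_cancel)

text \<open>The real \<open>G\<^sub>2\<close>-coordinates agree because \<open>K\<close> commutes with \<open>a\<^sub>v\<close>.\<close>

lemma DK_base_pt_h_eq:
  assumes k': "k' \<in> K_grp d" and a': "a' \<in> carrier_mat d d" and h: "h \<in> carrier_mat d d"
  shows "ptmul (DK_pt k' a') (base_pt_h h) = ptmul base_pt (L_pt (transpose_mat k * k' * k) (a' * h))"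
proof -
  have k'c: "k' \<in> carrier_mat d d"
    using SO_ptsD(1)[OF K_grpD(1)[OF k' d_ge_1]] .
  note K = SO_ptsD[OF k_SO]
  have kk: "k * (transpose_mat k * k' * k) = k' * k"
    using K k'c by (simp add: mat_simps mult_right_inverse_cancel[OF K(1) _ K(3)])
  have "akg * g_conj (transpose_mat k * k' * k) = a_v d v * (k' * (k * map_mat of_int g))"
    using K k'c of_int_g_carrier by (simp add: akg_mult_g_conj mat_simps mult_right_inverse_cancel[OF K(1) _ K(3)])
  also have "\<dots> = k' * akg"
    unfolding akg_def using a_v_mult_K_grp_mult[OF k' _ d_ge_1] K(1) a_v_carrier of_int_g_carrier
    by (simp add: mat_simps)
  finally show ?thesis
    unfolding DK_pt_def base_pt_h_def base_pt_def L_pt_def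
    using kk a' h k'c K(1) akg_carrier by (simp add: g_conj_mult g_conj_carrier mat_simps)
qed

lemma L_pt_mult_Gamma:
  assumes "h1 \<in> carrier_mat d d" "h2 \<in> carrier_mat d d" "\<beta> \<in> carrier_mat d d"
  shows "ptmul (L_pt h1 h2) (diag_emb (\<beta>, g_conj \<beta>))
    = L_pt (h1 * map_mat of_rat \<beta>) (h2 * map_mat of_rat \<beta>)"
  unfolding L_pt_def using assms by (simp add: of_rat_g_conj g_conj_mult)

lemma Gamma_H_pts: "\<beta> \<in> H_pts d v (Zinvp p) \<Longrightarrow> (\<beta>, g_conj \<beta>) \<in> Gamma p d"
  unfolding Gamma_def using H_ptsD(1) g_conj_H_pts[OF is_subring_Zinvp] by blast

lemma O_vph_subset_O_vp:
  assumes h: "h \<in> H_pts d v UNIV"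
  shows "O_vph p d v g k absv h \<subseteq> O_vp p d v g k TYPE('k)"
proof
  fix C assume "C \<in> O_vph p d v g k absv h"
  then obtain k' a' where C: "C = coset p d (ptmul (DK_pt k' a') (base_pt_h h))"
    and k': "k' \<in> K_grp d" and a': "a' \<in> H_pts d v (Zp absv)"
    unfolding O_vph_eq[OF H_pts_carrier[OF h]] by blast
  have "transpose_mat k * k' * k \<in> H_pts d v UNIV"
    using transpose_k_K_grp_conj[OF k'] .
  moreover have "a' * h \<in> H_pts d v UNIV"
    using H_pts_mult[OF is_subring_UNIV H_pts_mono[OF _ a'] h v_carrier] by simp
  ultimately show "C \<in> O_vp p d v g k TYPE('k)"
    unfolding O_vp_eq C DK_base_pt_h_eq[OF k' H_pts_carrier[OF a'] H_pts_carrier[OF h]] by blast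
qed

lemma coset_base_pt_in_O_vph:
  assumes h1: "h1 \<in> H_pts d v UNIV" and a': "a' \<in> H_pts d v (Zp absv)"
    and h: "h \<in> H_pts d v UNIV" and \<beta>: "\<beta> \<in> H_pts d v (Zinvp p)"
  shows "coset p d (ptmul base_pt (L_pt h1 (a' * h * map_mat of_rat \<beta>))) \<in> O_vph p d v g k absv h"
proof -
  let ?\<beta> = "map_mat of_rat \<beta> :: real mat"
  note \<beta>D = SO_ptsD[OF H_ptsD(1)[OF \<beta>]]
  have \<beta>R: "?\<beta> \<in> H_pts d v UNIV"
    using H_pts_of_rat[OF \<beta> v_carrier] .
  note \<beta>RD = SO_ptsD[OF H_ptsD(1)[OF \<beta>R]]
  have h1\<beta>: "h1 * transpose_mat ?\<beta> \<in> H_pts d v UNIV"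
    using H_pts_mult[OF is_subring_UNIV h1 H_pts_transpose[OF \<beta>R v_carrier] v_carrier] .
  define k' where "k' = k * (h1 * transpose_mat ?\<beta>) * transpose_mat k"
  have k': "k' \<in> K_grp d"
    unfolding k'_def using k_H_pts_conj[OF h1\<beta>] .
  have "transpose_mat k * k' * k = h1 * transpose_mat ?\<beta>"
    unfolding k'_def using SO_ptsD[OF k_SO] H_pts_carrier[OF h1] \<beta>RD(1)
    by (simp add: mat_simps mult_right_inverse_cancel)
  then have DK_M: "ptmul (DK_pt k' a') (base_pt_h h) = ptmul base_pt (L_pt (h1 * transpose_mat ?\<beta>) (a' * h))"
    using DK_base_pt_h_eq[OF k' H_pts_carrier[OF a'] H_pts_carrier[OF h]] by simp
  have L: "pt_carrier d (L_pt (h1 * transpose_mat ?\<beta>) (a' * h))"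
    using H_pts_carrier[OF h1] H_pts_carrier[OF a'] H_pts_carrier[OF h] \<beta>RD(1)
    by (intro pt_carrier_L_pt) (simp_all add: mat_simps)
  have D: "pt_carrier d (diag_emb (\<beta>, g_conj \<beta>) :: 'k pt)"
    using Gamma_carrier[OF Gamma_H_pts[OF \<beta>]] by simp
  have "L_pt h1 (a' * h * map_mat of_rat \<beta>)
      = ptmul (L_pt (h1 * transpose_mat ?\<beta>) (a' * h)) (diag_emb (\<beta>, g_conj \<beta>))"
    using L_pt_mult_Gamma[of "h1 * transpose_mat ?\<beta>" "a' * h" \<beta>] H_pts_carrier[OF h1]
      H_pts_carrier[OF a'] H_pts_carrier[OF h] \<beta>D(1) \<beta>RD(1,4)
    by (simp add: mat_simps)
  then have "ptmul base_pt (L_pt h1 (a' * h * map_mat of_rat \<beta>))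
      = ptmul (ptmul base_pt (L_pt (h1 * transpose_mat ?\<beta>) (a' * h))) (diag_emb (\<beta>, g_conj \<beta>))"
    using ptmul_assoc[OF pt_carrier_base_pt L D] by simp
  then have "coset p d (ptmul base_pt (L_pt h1 (a' * h * map_mat of_rat \<beta>)))
      = coset p d (ptmul (DK_pt k' a') (base_pt_h h))"
    using coset_ptmul_Gamma[OF d_ge_1 pt_carrier_ptmul[OF pt_carrier_base_pt L] Gamma_H_pts[OF \<beta>]] DK_M
    by simp
  then show ?thesis
    unfolding O_vph_eq[OF H_pts_carrier[OF h]] using k' a' by blast
qed

lemma M_carrier: "h \<in> M \<Longrightarrow> h \<in> H_pts d v UNIV"
  using rep unfolding is_rep_set_def by blast

lemma M0_if_double_coset_meets:
  assumes h: "h \<in> M" and a': "a' \<in> H_pts d v (Zp absv)" and \<beta>: "\<beta> \<in> H_pts d v (Zinvp p)"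
    and b: "b \<in> SO_pts d (Zp absv)" and \<gamma>: "\<gamma> \<in> SO_pts d (Zinvp p)"
    and eq: "a' * h * map_mat of_rat \<beta> = b * map_mat of_rat \<gamma>"
  shows "h \<in> M0 p d absv M"
proof -
  note A = SO_ptsD[OF H_ptsD(1)[OF a']] and \<beta>S = H_ptsD(1)[OF \<beta>]
  note BD = SO_ptsD[OF SO_pts_of_rat[OF \<beta>S, where 'a = 'k]]
  have hc: "h \<in> carrier_mat d d"
    using H_pts_carrier[OF M_carrier[OF h]] .
  have "(transpose_mat a' * b) * map_mat of_rat (\<gamma> * transpose_mat \<beta>)
      = transpose_mat a' * (b * map_mat of_rat \<gamma>) * transpose_mat (map_mat of_rat \<beta>)"
    using SO_ptsD(1)[OF b] SO_ptsD(1)[OF \<gamma>] SO_ptsD(1)[OF \<beta>S] A(1)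
    by (simp add: of_rat_hom.mat_hom_mult[of _ d d _ d] map_mat_transpose mat_simps)
  also have "\<dots> = h"
    unfolding eq[symmetric] using A BD hc
    by (simp add: mat_simps mult_right_inverse_cancel)
  finally have "h = (transpose_mat a' * b) * map_mat of_rat (\<gamma> * transpose_mat \<beta>)" ..
  moreover have "transpose_mat a' * b \<in> SO_pts d (Zp absv)"
    using SO_pts_mult[OF is_subring_Zp SO_pts_transpose[OF H_ptsD(1)[OF a']] b] .
  moreover have "\<gamma> * transpose_mat \<beta> \<in> SO_pts d (Zinvp p)"
    using SO_pts_mult[OF is_subring_Zinvp \<gamma> SO_pts_transpose[OF \<beta>S]] .
  ultimately show ?thesis
    unfolding M0_def using h by blast
qed

lemma O_vp_Int_U_subset:
  "O_vp p d v g k TYPE('k) \<inter> U_set p d absv \<subseteq> (\<Union>h\<in>M0 p d absv M. O_vph p d v g k absv h)"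
proof
  fix C assume C_in: "C \<in> O_vp p d v g k TYPE('k) \<inter> U_set p d absv"
  obtain h1 h2 where C: "C = coset p d (ptmul base_pt (L_pt h1 h2))"
    and h1: "h1 \<in> H_pts d v UNIV" and h2: "h2 \<in> H_pts d v UNIV"
    using C_in unfolding O_vp_eq by blast
  obtain y where y: "y \<in> G_RZp d absv" and Cy: "C = coset p d y"
    using C_in unfolding U_set_def by blast
  obtain ya yb yc ye where y_eq: "y = ((ya, yb), (yc, ye))"
    by (metis prod.collapse)
  have "pt_carrier d (ptmul base_pt (L_pt h1 h2))"
    using pt_carrier_ptmul[OF pt_carrier_base_pt pt_carrier_L_pt] H_pts_carrier[OF h1] H_pts_carrier[OF h2] .
  moreover have "coset p d (ptmul base_pt (L_pt h1 h2)) = coset p d y"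
    using C Cy by simp
  ultimately obtain \<gamma> where \<gamma>: "\<gamma> \<in> Gamma p d" and x_eq: "ptmul base_pt (L_pt h1 h2) = ptmul y (diag_emb \<gamma>)"
    using coset_eqD[OF _ d_ge_1] by blast
  obtain \<gamma>1 \<gamma>2 where \<gamma>_eq: "\<gamma> = (\<gamma>1, \<gamma>2)"
    by (cases \<gamma>)
  have yb: "yb \<in> SO_pts d (Zp absv)" and \<gamma>1: "\<gamma>1 \<in> SO_pts d (Zinvp p)"
    using y \<gamma> unfolding y_eq \<gamma>_eq G_RZp_def Gamma_def by auto
  obtain h a' \<beta> where h: "h \<in> M" and a': "a' \<in> H_pts d v (Zp absv)"
    and \<beta>: "\<beta> \<in> H_pts d v (Zinvp p)" and h2_eq: "h2 = a' * h * map_mat of_rat \<beta>"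
    using rep h2 unfolding is_rep_set_def dcoset_def by blast
  have "h2 = yb * map_mat of_rat \<gamma>1"
    using arg_cong[OF x_eq, of "\<lambda>x. snd (fst x)"] H_pts_carrier[OF h2]
    unfolding base_pt_def L_pt_def y_eq \<gamma>_eq by simp
  then have "h \<in> M0 p d absv M"
    unfolding h2_eq by (rule M0_if_double_coset_meets[OF h a' \<beta> yb \<gamma>1])
  moreover have "C \<in> O_vph p d v g k absv h"
    unfolding C h2_eq using coset_base_pt_in_O_vph[OF h1 a' M_carrier[OF h] \<beta>] .
  ultimately show "C \<in> (\<Union>h\<in>M0 p d absv M. O_vph p d v g k absv h)"
    by blast
qed

lemma DK_base_pt_h_Gamma_factor:
  assumes k': "k' \<in> K_grp d" and a': "a' \<in> H_pts d v (Zp absv)"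
    and a0: "a0 \<in> SO_pts d (Zp absv)" and b0: "b0 \<in> SO_pts d (Zinvp p)"
    and A': "A' \<in> ASL_pts d (Zp absv)" and B': "B' \<in> ASL_pts d (Zinvp p)"
    and eq: "g_conj a' * g_conj (a0 * map_mat of_rat b0) = A' * map_mat of_rat B'"
  obtains y where "y \<in> G_RZp d absv"
    and "ptmul (DK_pt k' a') (base_pt_h (a0 * map_mat of_rat b0)) = ptmul y (diag_emb (b0, B'))"
proof -
  note a'S = H_ptsD(1)[OF a'] and k'S = K_grpD(1)[OF k' d_ge_1]
  note b0R = SO_ptsD[OF SO_pts_of_rat[OF b0, where 'a = real]]
  note b0k = SO_ptsD[OF SO_pts_of_rat[OF b0, where 'a = 'k]]
  note B'i = ASL_pts_adj_mat[OF is_subring_Zinvp B' d_ge_1]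
  have B'c: "B' \<in> carrier_mat d d" "adj_mat B' \<in> carrier_mat d d"
    using B' B'i(1) unfolding ASL_pts_iff[OF d_ge_1] by auto
  have "map_mat of_rat (adj_mat B') * map_mat of_rat B' = (map_mat of_rat (adj_mat B' * B') :: real mat)"
    using B'c by (simp add: of_rat_hom.mat_hom_mult)
  then have B'iR: "map_mat of_rat (adj_mat B') * map_mat of_rat B' = (1\<^sub>m d :: real mat)"
    using B'i(3) by (simp add: of_rat_hom.mat_hom_one)
  define y where "y = ((k' * k * transpose_mat (map_mat of_rat b0), a' * a0),
                       (k' * akg * map_mat of_rat (adj_mat B'), A'))"
  have "k' * k * transpose_mat (map_mat of_rat b0) \<in> SO_pts d UNIV"
    using SO_pts_of_rat[OF b0] k'S k_SO by (intro SO_pts_mult SO_pts_transpose is_subring_UNIV)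
  moreover have "k' * akg * map_mat of_rat (adj_mat B') \<in> ASL_pts d UNIV"
    using ASL_pts_mult[OF is_subring_UNIV
        ASL_pts_mult[OF is_subring_UNIV K_grp_ASL_pts[OF k' d_ge_1] a_v_k_g_ASL_pts[folded akg_def] d_ge_1]
        ASL_pts_of_rat[OF d_ge_1 B'i(1)] d_ge_1] .
  ultimately have "y \<in> G_RZp d absv"
    unfolding y_def G_RZp_def using SO_pts_mult[OF is_subring_Zp a'S a0] A' by blast
  moreover have "ptmul (DK_pt k' a') (base_pt_h (a0 * map_mat of_rat b0)) = ptmul y (diag_emb (b0, B'))"
  proof -
    have "k' * k * transpose_mat (map_mat of_rat b0) * map_mat of_rat b0 = k' * k"
      using SO_ptsD(1)[OF k'S] k_carrier b0R by (simp add: mat_simps)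
    moreover have "k' * akg * map_mat of_rat (adj_mat B') * map_mat of_rat B' = k' * akg"
      using SO_ptsD(1)[OF k'S] akg_carrier B'c B'iR by (simp add: mat_simps)
    ultimately show ?thesis
      unfolding DK_pt_def base_pt_h_def y_def
      using eq SO_ptsD(1)[OF a'S] SO_ptsD(1)[OF a0] b0k(1) by (simp add: mat_simps)
  qed
  ultimately show ?thesis
    using that by blast
qed

lemma O_vph_subset_U:
  assumes hM0: "h \<in> M0 p d absv M"
  shows "O_vph p d v g k absv h \<subseteq> U_set p d absv"
proof
  fix C assume C: "C \<in> O_vph p d v g k absv h"
  obtain a0 b0 where h: "h \<in> M" and a0: "a0 \<in> SO_pts d (Zp absv)" and b0: "b0 \<in> SO_pts d (Zinvp p)"
    and h_eq: "h = a0 * map_mat of_rat b0"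
    using hM0 unfolding M0_def by blast
  have hH: "h \<in> H_pts d v UNIV"
    using M_carrier[OF h] .
  obtain k' a' where C_eq: "C = coset p d (ptmul (DK_pt k' a') (base_pt_h h))"
    and k': "k' \<in> K_grp d" and a': "a' \<in> H_pts d v (Zp absv)"
    using C unfolding O_vph_eq[OF H_pts_carrier[OF hH]] by blast
  note a'c = SO_ptsD(1)[OF H_ptsD(1)[OF a']]
  note a'a0 = SO_ptsD[OF SO_pts_mult[OF is_subring_Zp H_ptsD(1)[OF a'] a0]] and b0D = SO_ptsD[OF b0]
  define A where "A = g_conj (a' * a0)"
  define B where "B = g_conj b0"
  have A: "A \<in> carrier_mat d d" "det A = 1" "entries_in d (Zp absv) A"
    unfolding A_def using a'a0 by (simp_all add: g_conj_carrier det_g_conj entries_in_g_conj[OF is_subring_Zp])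
  have B: "B \<in> carrier_mat d d" "det B = 1" "entries_in d (Zinvp p) B"
    unfolding B_def using b0D by (simp_all add: g_conj_carrier det_g_conj entries_in_g_conj[OF is_subring_Zinvp])
  have AB: "g_conj a' * g_conj h = A * map_mat of_rat B"
    unfolding A_def B_def h_eq
    using a'a0(1) b0D(1) a'c SO_ptsD(1)[OF a0]
    by (simp add: of_rat_g_conj g_conj_mult g_conj_carrier mat_simps)
  have "a' * h \<in> H_pts d v UNIV"
    using H_pts_mult[OF is_subring_UNIV H_pts_mono[OF _ a'] hH v_carrier] by simp
  then have "last_row_unit d (g_conj (a' * h))"
    using g_conj_H_pts[OF is_subring_UNIV] unfolding ASL_pts_iff[OF d_ge_1] by blast
  then have "last_row_unit d (g_conj a' * g_conj h)"
    unfolding g_conj_mult[OF a'c H_pts_carrier[OF hH]] .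
  then obtain A' B' where A': "A' \<in> ASL_pts d (Zp absv)" and B': "B' \<in> ASL_pts d (Zinvp p)"
    and AB': "A * map_mat of_rat B = A' * map_mat of_rat B'"
    using ASL_split[OF d A B] unfolding AB by blast
  have "g_conj a' * g_conj (a0 * map_mat of_rat b0) = A' * map_mat of_rat B'"
    using AB AB' unfolding h_eq by simp
  then obtain y where y: "y \<in> G_RZp d absv"
    and y_eq: "ptmul (DK_pt k' a') (base_pt_h (a0 * map_mat of_rat b0)) = ptmul y (diag_emb (b0, B'))"
    by (rule DK_base_pt_h_Gamma_factor[OF k' a' a0 b0 A' B'])
  have "(b0, B') \<in> Gamma p d"
    unfolding Gamma_def using b0 B' by simp
  moreover have "pt_carrier d y"
    using y unfolding G_RZp_def SO_pts_def ASL_pts_def by auto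
  ultimately have "C = coset p d y"
    unfolding C_eq h_eq y_eq by (intro coset_ptmul_Gamma[OF d_ge_1])
  then show "C \<in> U_set p d absv"
    unfolding U_set_def using y by blast
qed

lemma H_pts_if_K_grp_shift:
  assumes k1: "k1 \<in> K_grp d" and k2: "k2 \<in> K_grp d" and \<gamma>: "\<gamma> \<in> SO_pts d (Zinvp p)"
    and eq: "k1 * k = k2 * k * map_mat of_rat \<gamma>"
  shows "\<gamma> \<in> H_pts d v (Zinvp p)"
proof -
  note k1D = SO_ptsD[OF K_grpD(1)[OF k1 d_ge_1]] and k2D = SO_ptsD[OF K_grpD(1)[OF k2 d_ge_1]]
  note K = SO_ptsD[OF k_SO]
  have "map_mat of_rat \<gamma> = transpose_mat k * (transpose_mat k2 * (k1 * k))"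
    unfolding eq using K k2D SO_ptsD(1)[OF SO_pts_of_rat[OF \<gamma>, where 'a = real]]
    by (simp add: mat_simps mult_right_inverse_cancel)
  then have "(map_mat of_rat \<gamma> :: real mat) \<in> H_pts d v UNIV"
    using transpose_k_K_grp_conj[OF K_grp_transpose_mult[OF k1 k2]] K(1) k1D(1) k2D(1)
    by (simp add: mat_simps)
  then show ?thesis
    using H_pts_if_of_rat[OF \<gamma> v_carrier] by blast
qed

lemma double_coset_if_O_vph_meet:
  assumes h1: "h1 \<in> H_pts d v UNIV" and h2: "h2 \<in> H_pts d v UNIV"
    and C1: "C \<in> O_vph p d v g k absv h1" and C2: "C \<in> O_vph p d v g k absv h2"
  shows "h2 \<in> dcoset p d v absv h1"
proof -
  obtain k1 a1 where C1_eq: "C = coset p d (ptmul (DK_pt k1 a1) (base_pt_h h1))"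
    and k1: "k1 \<in> K_grp d" and a1: "a1 \<in> H_pts d v (Zp absv)"
    using C1 unfolding O_vph_eq[OF H_pts_carrier[OF h1]] by blast
  obtain k2 a2 where C2_eq: "C = coset p d (ptmul (DK_pt k2 a2) (base_pt_h h2))"
    and k2: "k2 \<in> K_grp d" and a2: "a2 \<in> H_pts d v (Zp absv)"
    using C2 unfolding O_vph_eq[OF H_pts_carrier[OF h2]] by blast
  note a1D = SO_ptsD[OF H_ptsD(1)[OF a1]] and a2D = SO_ptsD[OF H_ptsD(1)[OF a2]]
  have "coset p d (ptmul (DK_pt k1 a1) (base_pt_h h1)) = coset p d (ptmul (DK_pt k2 a2) (base_pt_h h2))"
    using C1_eq C2_eq by simp
  then obtain \<gamma> where \<gamma>: "\<gamma> \<in> Gamma p d"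
    and w_eq: "ptmul (DK_pt k1 a1) (base_pt_h h1) = ptmul (ptmul (DK_pt k2 a2) (base_pt_h h2)) (diag_emb \<gamma>)"
    by (rule coset_eqD[OF _ d_ge_1 pt_carrier_DK_base_pt_h[OF SO_ptsD(1)[OF K_grpD(1)[OF k1 d_ge_1]]
          a1D(1) H_pts_carrier[OF h1]]])
  obtain \<gamma>1 \<gamma>2 where \<gamma>_eq: "\<gamma> = (\<gamma>1, \<gamma>2)"
    by (cases \<gamma>)
  have \<gamma>1: "\<gamma>1 \<in> SO_pts d (Zinvp p)"
    using \<gamma> unfolding \<gamma>_eq Gamma_def by simp
  note \<gamma>K = SO_ptsD[OF SO_pts_of_rat[OF \<gamma>1, where 'a = 'k]]
  have e1: "k1 * k = k2 * k * map_mat of_rat \<gamma>1" and e2: "a1 * h1 = a2 * h2 * map_mat of_rat \<gamma>1"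
    using arg_cong[OF w_eq, of "\<lambda>x. fst (fst x)"] arg_cong[OF w_eq, of "\<lambda>x. snd (fst x)"]
    unfolding DK_pt_def base_pt_h_def \<gamma>_eq by simp_all
  have \<gamma>1H: "\<gamma>1 \<in> H_pts d v (Zinvp p)"
    using H_pts_if_K_grp_shift[OF k1 k2 \<gamma>1 e1] .
  have "h2 = transpose_mat a2 * a1 * h1 * map_mat of_rat (transpose_mat \<gamma>1)"
    using e2 a1D(1) a2D H_pts_carrier[OF h1] H_pts_carrier[OF h2] \<gamma>K
    by (simp add: map_mat_transpose mat_simps mult_right_inverse_cancel)
  moreover have "transpose_mat a2 * a1 \<in> H_pts d v (Zp absv)"
    using H_pts_mult[OF is_subring_Zp H_pts_transpose[OF a2 v_carrier] a1 v_carrier] .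
  moreover have "transpose_mat \<gamma>1 \<in> H_pts d v (Zinvp p)"
    using H_pts_transpose[OF \<gamma>1H v_carrier] .
  ultimately show ?thesis
    unfolding dcoset_def by blast
qed

lemma O_vph_disjoint: "disjoint_family_on (O_vph p d v g k absv) M"
  unfolding disjoint_family_on_def
proof (intro ballI impI)
  fix h1 h2 assume h: "h1 \<in> M" "h2 \<in> M" "h1 \<noteq> h2"
  have "h2 = 1\<^sub>m d * h2 * map_mat of_rat (1\<^sub>m d)"
    using H_pts_carrier[OF M_carrier[OF h(2)]] by (simp add: of_rat_hom.mat_hom_one)
  then have "h2 \<in> dcoset p d v absv h2"
    unfolding dcoset_def using H_pts_one[OF is_subring_Zp v_carrier] H_pts_one[OF is_subring_Zinvp v_carrier]
    by blast
  then have "h2 \<notin> dcoset p d v absv h1"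
    using rep h unfolding is_rep_set_def disjoint_family_on_def by blast
  then show "O_vph p d v g k absv h1 \<inter> O_vph p d v g k absv h2 = {}"
    using double_coset_if_O_vph_meet[OF M_carrier[OF h(1)] M_carrier[OF h(2)]] by blast
qed

end

theorem corollary3p5:
  fixes p d :: nat and v :: "int vec" and g :: "int mat" and k :: "real mat"
    and absv :: "'k::field_char_0 \<Rightarrow> real" and M :: "'k mat set"
  assumes "d \<ge> 2"
    and "prime p" and "odd p"
    and "is_Qp p absv"
    and "primitive d v"
    and "is_gv d v g"
    and "is_kv d v k"
    and "is_rep_set p d v absv M"
  shows "O_vp p d v g k TYPE('k) \<inter> U_set p d absv = (\<Union>h\<in>M0 p d absv M. O_vph p d v g k absv h)
         \<and> disjoint_family_on (O_vph p d v g k absv) (M0 p d absv M)"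
proof -
  interpret orbit_setting d v g k p absv M
    using assms by unfold_locales auto
  have M0_M: "M0 p d absv M \<subseteq> M"
    unfolding M0_def by blast
  note O_vp_Int_U_subset
  moreover have "(\<Union>h\<in>M0 p d absv M. O_vph p d v g k absv h) \<subseteq> O_vp p d v g k TYPE('k) \<inter> U_set p d absv"
    using O_vph_subset_O_vp[OF M_carrier] O_vph_subset_U M0_M by blast
  moreover have "disjoint_family_on (O_vph p d v g k absv) (M0 p d absv M)"
    using disjoint_family_on_mono[OF M0_M O_vph_disjoint] .
  ultimately show ?thesis
    by blast
qed

end
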